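(* Let $n,m>3$ be integers. A bijection $\psi$ of the vertex set of $\mathcal{CSR}(m,n)$ is an automorphism of $\mathcal{CSR}(m,n)$ if and only if there are a permutation $\sigma$ of $[m]$ and $c,d_1,\dots,d_m\in\mathbb{Z}_n$ with $c$ coprime to $n$ and $\sum_i d_i=0$ such that for every vertex $x=(x_1,\dots,x_m)$, $$\psi(x)=(c\,x_{\sigma(1)}+d_1,\ \dots,\ c\,x_{\sigma(m)}+d_m).$$
   Context: For positive integers $m,n$, the cyclic simplicial rook graph $\mathcal{CSR}(m,n)$ is the graph whose vertices are the vectors $(a_1,\dots,a_m)\in\mathbb{Z}_n^m$ with $a_1+\cdots+a_m\equiv 0 \pmod n$, two vertices being adjacent if and only if their vectors differ in exactly two coordinates. $[m]=\{1,\dots,m\}$. *)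

theory Defs
  imports "HOL-Combinatorics.Permutations"
begin

text \<open>Vertices of CSR(m,n): vectors indexed by [m] = {1..m} with entries in Z_n,
  represented by canonical residues {0..<n} (entries outside [m] fixed to 0),
  with coordinate sum congruent to 0 mod n.\<close>
definition csr_vertices :: "nat \<Rightarrow> nat \<Rightarrow> (nat \<Rightarrow> int) set" where
  "csr_vertices m n = {x. (\<forall>i\<in>{1..m}. x i \<in> {0..<int n}) \<and> (\<forall>i. i \<notin> {1..m} \<longrightarrow> x i = 0)
      \<and> (\<Sum>i=1..m. x i) mod int n = 0}"

definition csr_adj :: "nat \<Rightarrow> (nat \<Rightarrow> int) \<Rightarrow> (nat \<Rightarrow> int) \<Rightarrow> bool" where
  "csr_adj m x y \<longleftrightarrow> card {i\<in>{1..m}. x i \<noteq> y i} = 2"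

definition csr_automorphism :: "nat \<Rightarrow> nat \<Rightarrow> ((nat \<Rightarrow> int) \<Rightarrow> (nat \<Rightarrow> int)) \<Rightarrow> bool" where
  "csr_automorphism m n \<psi> \<longleftrightarrow> bij_betw \<psi> (csr_vertices m n) (csr_vertices m n) \<and>
     (\<forall>x\<in>csr_vertices m n. \<forall>y\<in>csr_vertices m n. csr_adj m x y \<longleftrightarrow> csr_adj m (\<psi> x) (\<psi> y))"

end

theory Submission
  imports Defs
begin

(* An edge x - y of CSR(m,n) has a direction: the 2-set of coordinates in which x and y differ.
   The heart of the proof is that directions are visible in the graph.  For a triangle x, y, w,
   the vertex w lies on the line through x and y (same direction) iff every common neighbour of
   x and y that is not adjacent to w shares at least five neighbours with w, and the common
   neighbours of x and y adjacent to w form a clique: common neighbours off the line differ from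
   w in three coordinates and share six neighbours with it, whereas a turning triangle always has
   a common neighbour sharing at most four neighbours with w, or two non-adjacent ones adjacent
   to w.  Hence an automorphism preserves equality of directions at every vertex.  The induced
   map on pairs of coordinates keeps disjoint pairs disjoint and, by an arithmetic argument with
   shifts by 1 and by 2, maps stars to stars, so it comes from a permutation of the coordinates,
   which is the same at adjacent vertices and hence global.  The sigma(i)-th coordinate of the
   image of x then depends only on x_i; as zero-sum vectors go to zero-sum vectors, these
   coordinate functions are c t + d_i modulo n for a single c, a unit because the automorphism
   is injective. *)

lemma card_2_eqI:
  assumes "card S = 2" "a \<in> S" "b \<in> S" "a \<noteq> b"
  shows "S = {a, b}"
proof -
  have "finite S"
    using assms(1) by (metis card.infinite zero_neq_numeral)
  then show ?thesis
    using assms by (intro card_subset_eq[symmetric]) auto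
qed

lemma card_2_obtain_other:
  assumes "card S = 2" "p \<in> S"
  obtains q where "q \<noteq> p" "S = {p, q}"
proof -
  obtain a b where ab: "a \<noteq> b" "S = {a, b}"
    using assms(1) by (meson card_2_iff)
  then show ?thesis
    using that[of b] that[of a] assms(2) by (cases "p = a") (auto simp: insert_commute)
qed

lemma exists_fourth:
  assumes "finite I" "3 < card I"
  obtains l where "l \<in> I" "l \<notin> {i, j, k}"
proof -
  have "card {i, j, k} \<le> 3"
    by (auto simp: card_insert_if)
  then have "\<not> I \<subseteq> {i, j, k}"
    using assms(2) card_mono[of "{i, j, k}" I] by auto
  then show ?thesis
    using that by blast
qed

lemma double_dvd_imp_mod_eq:
  fixes a d :: int
  assumes "0 < d" "d dvd 2 * a" "\<not> d dvd a"
  shows "2 * (a mod d) = d"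
proof -
  have "d dvd 2 * (a mod d)"
    using assms(2) by (simp add: dvd_eq_mod_eq_0 mod_mult_right_eq)
  then obtain t where t: "2 * (a mod d) = d * t"
    by (elim dvdE)
  have "0 \<le> a mod d" "a mod d < d" "a mod d \<noteq> 0"
    using assms by (auto simp: dvd_eq_mod_eq_0)
  then have "d * 0 < d * t" "d * t < d * 2"
    using t by linarith+
  then have "0 < t" "t < 2"
    using assms(1) mult_less_cancel_left_pos by blast+
  then show ?thesis
    using t by simp
qed

lemma coprime_of_dvd_mult_cancel:
  fixes c d :: int
  assumes "0 < d" "\<And>t. d dvd c * t \<Longrightarrow> d dvd t"
  shows "coprime c d"
proof -
  define g where "g = gcd c d"
  have "g dvd c"
    unfolding g_def by (rule gcd_dvd1)
  then obtain c' where c': "c = g * c'"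
    by (elim dvdE)
  have "g dvd d"
    unfolding g_def by (rule gcd_dvd2)
  then obtain d' where d': "d = g * d'"
    by (elim dvdE)
  have "0 < g"
    using assms(1) by (simp add: g_def)
  then have "0 < d'"
    using assms(1) d' by (simp add: zero_less_mult_iff)
  have "c * d' = c' * d"
    using c' d' by (simp add: ac_simps)
  then have "d dvd d'"
    using assms(2)[of d'] by simp
  then have "g * d' \<le> d'"
    using zdvd_imp_le[OF _ \<open>0 < d'\<close>] d' by simp
  then have "g = 1"
    using \<open>0 < g\<close> \<open>0 < d'\<close> by (simp add: mult_le_cancel_right2)
  then show ?thesis
    by (simp add: g_def coprime_iff_gcd_eq_1)
qed

section \<open>Maps on pairs induced by an injection\<close>

lemma pair_map_neq:
  fixes f :: "'a \<Rightarrow> 'a \<Rightarrow> 'b set"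
  assumes "finite I" "3 < card I"
    and commute: "\<And>i j. i \<in> I \<Longrightarrow> j \<in> I \<Longrightarrow> i \<noteq> j \<Longrightarrow> f i j = f j i"
    and star: "\<And>i j k l. i \<in> I \<Longrightarrow> j \<in> I \<Longrightarrow> k \<in> I \<Longrightarrow> l \<in> I \<Longrightarrow> distinct [i, j, k, l] \<Longrightarrow>
      f i j \<inter> f i k \<inter> f i l \<noteq> {}"
    and disj: "\<And>i j k l. i \<in> I \<Longrightarrow> j \<in> I \<Longrightarrow> k \<in> I \<Longrightarrow> l \<in> I \<Longrightarrow> distinct [i, j, k, l] \<Longrightarrow>
      f i j \<inter> f k l = {}"
    and "i \<in> I" "j \<in> I" "k \<in> I" "distinct [i, j, k]"
  shows "f i j \<noteq> f i k"
proof
  assume eq: "f i j = f i k"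
  obtain l where l: "l \<in> I" "l \<notin> {i, j, k}"
    using exists_fourth[OF assms(1,2)] by blast
  have "f j l \<inter> f i k = {}"
    using disj[OF assms(7) l(1) assms(6,8)] assms(9) l(2) by auto
  moreover have "f j i \<inter> f j k \<inter> f j l \<noteq> {}"
    using star[OF assms(7,6,8) l(1)] assms(9) l(2) by auto
  ultimately show False
    using eq commute[OF assms(6,7)] assms(9) by auto
qed

lemma pair_map_common_point:
  fixes f :: "'a \<Rightarrow> 'a \<Rightarrow> 'b set"
  assumes "finite I" "3 < card I"
    and commute: "\<And>i j. i \<in> I \<Longrightarrow> j \<in> I \<Longrightarrow> i \<noteq> j \<Longrightarrow> f i j = f j i"
    and card2: "\<And>i j. i \<in> I \<Longrightarrow> j \<in> I \<Longrightarrow> i \<noteq> j \<Longrightarrow> card (f i j) = 2"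
    and star: "\<And>i j k l. i \<in> I \<Longrightarrow> j \<in> I \<Longrightarrow> k \<in> I \<Longrightarrow> l \<in> I \<Longrightarrow> distinct [i, j, k, l] \<Longrightarrow>
      f i j \<inter> f i k \<inter> f i l \<noteq> {}"
    and disj: "\<And>i j k l. i \<in> I \<Longrightarrow> j \<in> I \<Longrightarrow> k \<in> I \<Longrightarrow> l \<in> I \<Longrightarrow> distinct [i, j, k, l] \<Longrightarrow>
      f i j \<inter> f k l = {}"
    and "i \<in> I"
  shows "\<exists>p. \<forall>j \<in> I. j \<noteq> i \<longrightarrow> p \<in> f i j"
proof -
  obtain j where j: "j \<in> I" "j \<noteq> i"
    using exists_fourth[OF assms(1,2)] by blast
  obtain k where k: "k \<in> I" "k \<notin> {i, j}"
    using exists_fourth[OF assms(1,2)] by blast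
  obtain l where l: "l \<in> I" "l \<notin> {i, j, k}"
    using exists_fourth[OF assms(1,2)] by blast
  obtain p where p: "p \<in> f i j" "p \<in> f i k"
    using star[OF \<open>i \<in> I\<close> j(1) k(1) l(1)] j k l by auto
  have "f i j \<noteq> f i k"
    using pair_map_neq[of I f, OF assms(1,2) commute star disj \<open>i \<in> I\<close> j(1) k(1)] j(2) k(2) by auto
  then have unique: "p' = p" if "p' \<in> f i j" "p' \<in> f i k" for p'
    using card_2_eqI[OF card2[OF \<open>i \<in> I\<close> j(1)] p(1) that(1)]
      card_2_eqI[OF card2[OF \<open>i \<in> I\<close> k(1)] p(2) that(2)] j(2) k(2) by (metis insert_iff)
  have "p \<in> f i h" if h: "h \<in> I" "h \<noteq> i" for h
  proof (cases "h = j \<or> h = k")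
    case False
    then obtain p' where "p' \<in> f i j" "p' \<in> f i k" "p' \<in> f i h"
      using star[OF \<open>i \<in> I\<close> j(1) k(1) h(1)] j k h(2) by auto
    then show ?thesis
      using unique by blast
  qed (use p in auto)
  then show ?thesis
    by blast
qed

(* Without the star hypothesis the complement map {i, j} \<mapsto> I - {i, j} would be a
   counterexample for card I = 4. *)
lemma pair_map_induced_by_injection:
  fixes f :: "'a \<Rightarrow> 'a \<Rightarrow> 'b set"
  assumes "finite I" "3 < card I"
    and commute: "\<And>i j. i \<in> I \<Longrightarrow> j \<in> I \<Longrightarrow> i \<noteq> j \<Longrightarrow> f i j = f j i"
    and card2: "\<And>i j. i \<in> I \<Longrightarrow> j \<in> I \<Longrightarrow> i \<noteq> j \<Longrightarrow> card (f i j) = 2"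
    and star: "\<And>i j k l. i \<in> I \<Longrightarrow> j \<in> I \<Longrightarrow> k \<in> I \<Longrightarrow> l \<in> I \<Longrightarrow> distinct [i, j, k, l] \<Longrightarrow>
      f i j \<inter> f i k \<inter> f i l \<noteq> {}"
    and disj: "\<And>i j k l. i \<in> I \<Longrightarrow> j \<in> I \<Longrightarrow> k \<in> I \<Longrightarrow> l \<in> I \<Longrightarrow> distinct [i, j, k, l] \<Longrightarrow>
      f i j \<inter> f k l = {}"
  obtains \<sigma> where "inj_on \<sigma> I" "\<And>i j. i \<in> I \<Longrightarrow> j \<in> I \<Longrightarrow> i \<noteq> j \<Longrightarrow> f i j = {\<sigma> i, \<sigma> j}"
proof -
  have "\<exists>p. \<forall>j \<in> I. j \<noteq> i \<longrightarrow> p \<in> f i j" if "i \<in> I" for i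
    by (rule pair_map_common_point[OF assms that])
  then have "\<forall>i \<in> I. \<exists>p. \<forall>j \<in> I. j \<noteq> i \<longrightarrow> p \<in> f i j"
    by blast
  then obtain \<sigma> where "\<forall>i \<in> I. \<forall>j \<in> I. j \<noteq> i \<longrightarrow> \<sigma> i \<in> f i j"
    using bchoice[of I "\<lambda>i p. \<forall>j \<in> I. j \<noteq> i \<longrightarrow> p \<in> f i j"] by blast
  then have \<sigma>: "\<sigma> i \<in> f i j" if "i \<in> I" "j \<in> I" "j \<noteq> i" for i j
    using that by blast
  have neq: "\<sigma> i \<noteq> \<sigma> j" if "i \<in> I" "j \<in> I" "i \<noteq> j" for i j
  proof -
    obtain k where k: "k \<in> I" "k \<notin> {i, j}"
      using exists_fourth[OF assms(1,2)] by blast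
    obtain l where l: "l \<in> I" "l \<notin> {i, j, k}"
      using exists_fourth[OF assms(1,2)] by blast
    have "f i k \<inter> f j l = {}"
      using disj[OF that(1) k(1) that(2) l(1)] that(3) k l by auto
    then show ?thesis
      using \<sigma>[OF that(1) k(1)] \<sigma>[OF that(2) l(1)] k l by auto
  qed
  show ?thesis
  proof
    show "inj_on \<sigma> I"
      using neq by (meson inj_onI)
    fix i j assume ij: "i \<in> I" "j \<in> I" "i \<noteq> j"
    show "f i j = {\<sigma> i, \<sigma> j}"
      using card_2_eqI[OF card2[OF ij] \<sigma>[OF ij(1,2)]] \<sigma>[OF ij(2,1)] commute[OF ij] neq[OF ij] ij(3) by auto
  qed
qed

section \<open>A graph-theoretic test for lines\<close>

definition nbrs :: "'a set \<Rightarrow> ('a \<Rightarrow> 'a \<Rightarrow> bool) \<Rightarrow> 'a \<Rightarrow> 'a set" where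
  "nbrs V E x = {y \<in> V. E x y}"

(* The threshold 5 separates the at least six common neighbours of two vertices of CSR(m,n)
   differing in three coordinates (card_common_nbrs_ge_6) from the at most four of
   card_common_nbrs_le_4. *)
definition line_triangle :: "'a set \<Rightarrow> ('a \<Rightarrow> 'a \<Rightarrow> bool) \<Rightarrow> 'a \<Rightarrow> 'a \<Rightarrow> 'a \<Rightarrow> bool" where
  "line_triangle V E x y w \<longleftrightarrow>
     (\<forall>u \<in> nbrs V E x \<inter> nbrs V E y. u \<noteq> w \<longrightarrow> \<not> E u w \<longrightarrow> 5 \<le> card (nbrs V E u \<inter> nbrs V E w)) \<and>
     (\<forall>u \<in> nbrs V E x \<inter> nbrs V E y. \<forall>v \<in> nbrs V E x \<inter> nbrs V E y.
        E u w \<longrightarrow> E v w \<longrightarrow> u \<noteq> v \<longrightarrow> E u v)"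

lemma nbrs_subset: "nbrs V E x \<subseteq> V"
  by (auto simp: nbrs_def)

lemma nbrs_iso:
  assumes "bij_betw f V V'" "\<And>x y. x \<in> V \<Longrightarrow> y \<in> V \<Longrightarrow> E' (f x) (f y) \<longleftrightarrow> E x y" "x \<in> V"
  shows "nbrs V' E' (f x) = f ` nbrs V E x"
proof -
  have "nbrs V' E' (f x) = {z \<in> f ` V. E' (f x) z}"
    using assms(1) by (simp add: nbrs_def bij_betw_def)
  also have "\<dots> = f ` nbrs V E x"
    using assms(2,3) by (auto simp: nbrs_def)
  finally show ?thesis .
qed

lemma line_triangle_iso:
  assumes iso: "bij_betw f V V'" "\<And>x y. x \<in> V \<Longrightarrow> y \<in> V \<Longrightarrow> E' (f x) (f y) \<longleftrightarrow> E x y"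
    and "x \<in> V" "y \<in> V" "w \<in> V"
  shows "line_triangle V' E' (f x) (f y) (f w) \<longleftrightarrow> line_triangle V E x y w"
proof -
  have inj: "inj_on f V"
    using iso(1) by (simp add: bij_betw_def)
  have common: "nbrs V' E' (f u) \<inter> nbrs V' E' (f v) = f ` (nbrs V E u \<inter> nbrs V E v)"
    if "u \<in> V" "v \<in> V" for u v
    using nbrs_iso[of f V V' E' E, OF iso] that inj_on_image_Int[OF inj nbrs_subset nbrs_subset] by simp
  have card: "card (nbrs V' E' (f u) \<inter> nbrs V' E' (f v)) = card (nbrs V E u \<inter> nbrs V E v)"
    if "u \<in> V" "v \<in> V" for u v
    using common[OF that] inj_on_subset[OF inj] nbrs_subset by (metis card_image le_infI1)
  define C where "C = nbrs V E x \<inter> nbrs V E y"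
  have C_V: "u \<in> V" if "u \<in> C" for u
    using nbrs_subset[of V E x] that by (auto simp: C_def)
  have "(\<forall>u \<in> C. f u \<noteq> f w \<longrightarrow> \<not> E' (f u) (f w) \<longrightarrow> 5 \<le> card (nbrs V' E' (f u) \<inter> nbrs V' E' (f w)))
    \<longleftrightarrow> (\<forall>u \<in> C. u \<noteq> w \<longrightarrow> \<not> E u w \<longrightarrow> 5 \<le> card (nbrs V E u \<inter> nbrs V E w))"
    using assms(5) by (intro ball_cong) (auto simp: C_V iso(2) card inj_on_eq_iff[OF inj])
  moreover have "(\<forall>u \<in> C. \<forall>v \<in> C. E' (f u) (f w) \<longrightarrow> E' (f v) (f w) \<longrightarrow> f u \<noteq> f v \<longrightarrow> E' (f u) (f v))
    \<longleftrightarrow> (\<forall>u \<in> C. \<forall>v \<in> C. E u w \<longrightarrow> E v w \<longrightarrow> u \<noteq> v \<longrightarrow> E u v)"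
    using assms(5) by (intro ball_cong refl) (auto simp: C_V iso(2) inj_on_eq_iff[OF inj])
  ultimately show ?thesis
    unfolding line_triangle_def common[OF assms(3,4)] ball_simps(9) C_def by simp
qed

section \<open>Vertices and directions of CSR(m,n)\<close>

definition edge_vec :: "nat \<Rightarrow> nat \<Rightarrow> int \<Rightarrow> nat \<Rightarrow> int" where
  "edge_vec i j a = (\<lambda>t. (if t = i then a else 0) - (if t = j then a else 0))"

lemma edge_vec_diff: "edge_vec i j a t - edge_vec i j b t = edge_vec i j (a - b) t"
  by (simp add: edge_vec_def)

lemma dvd_edge_vec: "d dvd a \<Longrightarrow> d dvd edge_vec i j a t"
  by (simp add: edge_vec_def)

lemma edge_vec_swap: "edge_vec i j a = edge_vec j i (- a)"
  by (simp add: edge_vec_def fun_eq_iff)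

locale csr =
  fixes m n :: nat
  assumes n_pos: "0 < n"
begin

abbreviation V :: "(nat \<Rightarrow> int) set" where
  "V \<equiv> csr_vertices m n"

abbreviation adj :: "(nat \<Rightarrow> int) \<Rightarrow> (nat \<Rightarrow> int) \<Rightarrow> bool" where
  "adj \<equiv> csr_adj m"

definition diffs :: "(nat \<Rightarrow> int) \<Rightarrow> (nat \<Rightarrow> int) \<Rightarrow> nat set" where
  "diffs x y = {i \<in> {1..m}. x i \<noteq> y i}"

definition translate :: "(nat \<Rightarrow> int) \<Rightarrow> (nat \<Rightarrow> int) \<Rightarrow> nat \<Rightarrow> int" where
  "translate x \<delta> = (\<lambda>i. if i \<in> {1..m} then (x i + \<delta> i) mod int n else 0)"

abbreviation shift :: "(nat \<Rightarrow> int) \<Rightarrow> nat \<Rightarrow> nat \<Rightarrow> int \<Rightarrow> nat \<Rightarrow> int" where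
  "shift x i j a \<equiv> translate x (edge_vec i j a)"

lemma mem_diffs_iff: "i \<in> diffs x y \<longleftrightarrow> i \<in> {1..m} \<and> x i \<noteq> y i"
  by (simp add: diffs_def)

lemma diffs_subset: "diffs x y \<subseteq> {1..m}"
  by (auto simp: diffs_def)

lemma finite_diffs [simp]: "finite (diffs x y)"
  using diffs_subset finite_subset by blast

lemma diffs_commute: "diffs x y = diffs y x"
  by (auto simp: diffs_def)

lemma diffs_self [simp]: "diffs x x = {}"
  by (simp add: diffs_def)

lemma adj_iff_card_diffs: "adj x y \<longleftrightarrow> card (diffs x y) = 2"
  by (simp add: csr_adj_def diffs_def)

lemma adj_imp_neq: "adj x y \<Longrightarrow> x \<noteq> y"
  by (auto simp: adj_iff_card_diffs diffs_def)

lemma adj_imp_diffs_eq: "adj x y \<Longrightarrow> \<exists>i j. i \<noteq> j \<and> diffs x y = {i, j}"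
  unfolding adj_iff_card_diffs card_2_iff by blast

lemma vertex_coord_range: "x \<in> V \<Longrightarrow> i \<in> {1..m} \<Longrightarrow> 0 \<le> x i \<and> x i < int n"
  by (auto simp: csr_vertices_def)

lemma vertex_coord_outside: "x \<in> V \<Longrightarrow> i \<notin> {1..m} \<Longrightarrow> x i = 0"
  by (auto simp: csr_vertices_def)

lemma vertex_sum_dvd: "x \<in> V \<Longrightarrow> int n dvd (\<Sum>i=1..m. x i)"
  by (auto simp: csr_vertices_def)

lemma vertex_coord_mod: "x \<in> V \<Longrightarrow> i \<in> {1..m} \<Longrightarrow> x i mod int n = x i"
  using vertex_coord_range by simp

lemma vertex_coord_eq_iff:
  "x \<in> V \<Longrightarrow> y \<in> V \<Longrightarrow> i \<in> {1..m} \<Longrightarrow> x i = y i \<longleftrightarrow> int n dvd (x i - y i)"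
  by (metis vertex_coord_mod mod_eq_dvd_iff)

lemma vertex_eqI: "x \<in> V \<Longrightarrow> y \<in> V \<Longrightarrow> (\<And>i. i \<in> {1..m} \<Longrightarrow> x i = y i) \<Longrightarrow> x = y"
  by (rule ext) (metis vertex_coord_outside)

lemma diffs_empty_iff: "x \<in> V \<Longrightarrow> y \<in> V \<Longrightarrow> diffs x y = {} \<longleftrightarrow> x = y"
  by (auto simp: diffs_def intro: vertex_eqI)

lemma zero_vertex: "(\<lambda>_. 0) \<in> V"
  using n_pos by (simp add: csr_vertices_def)

lemma finite_vertices: "finite V"
proof (rule finite_subset)
  show "V \<subseteq> {x. \<forall>i. (i \<in> {1..m} \<longrightarrow> x i \<in> {0..<int n}) \<and> (i \<notin> {1..m} \<longrightarrow> x i = 0)}"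
    by (auto simp: csr_vertices_def)
  show "finite {x. \<forall>i. (i \<in> {1..m} \<longrightarrow> x i \<in> {0..<int n}) \<and> (i \<notin> {1..m} \<longrightarrow> x i = (0::int))}"
    by (rule finite_set_of_finite_funs) auto
qed

lemma sum_diffs_dvd:
  assumes "x \<in> V" "y \<in> V" "diffs x y \<subseteq> S" "S \<subseteq> {1..m}"
  shows "int n dvd (\<Sum>i\<in>S. y i - x i)"
proof -
  have "(\<Sum>i\<in>S. y i - x i) = (\<Sum>i=1..m. y i - x i)"
    by (rule sum.mono_neutral_left) (use assms in \<open>auto simp: diffs_def\<close>)
  also have "\<dots> = (\<Sum>i=1..m. y i) - (\<Sum>i=1..m. x i)"
    by (simp add: sum_subtractf)
  finally show ?thesis
    using vertex_sum_dvd assms(1,2) by simp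
qed

lemma card_diffs_ne_1:
  assumes "x \<in> V" "y \<in> V"
  shows "card (diffs x y) \<noteq> 1"
proof
  assume "card (diffs x y) = 1"
  then obtain j where j: "diffs x y = {j}"
    by (auto simp: card_Suc_eq)
  then have j_in: "j \<in> {1..m}" and "x j \<noteq> y j"
    by (auto simp: diffs_def)
  moreover have "int n dvd (y j - x j)"
    using sum_diffs_dvd[OF assms, of "{j}"] j j_in by simp
  ultimately show False
    using vertex_coord_eq_iff assms by (metis dvd_diff_commute)
qed

lemma translate_apply [simp]: "i \<in> {1..m} \<Longrightarrow> translate x \<delta> i = (x i + \<delta> i) mod int n"
  by (simp add: translate_def)

lemma translate_in_vertices:
  assumes "x \<in> V" "int n dvd (\<Sum>i=1..m. \<delta> i)"
  shows "translate x \<delta> \<in> V"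
proof -
  have "int n dvd (\<Sum>i=1..m. x i + \<delta> i)"
    using vertex_sum_dvd[OF assms(1)] assms(2) by (simp add: sum.distrib)
  moreover have "(\<Sum>i=1..m. (x i + \<delta> i) mod int n) mod int n = (\<Sum>i=1..m. x i + \<delta> i) mod int n"
    by (rule mod_sum_eq)
  ultimately have "int n dvd (\<Sum>i=1..m. (x i + \<delta> i) mod int n)"
    by (simp add: dvd_eq_mod_eq_0)
  then show ?thesis
    using n_pos by (simp add: csr_vertices_def translate_def)
qed

lemma sum_edge_vec: "i \<in> {1..m} \<Longrightarrow> j \<in> {1..m} \<Longrightarrow> (\<Sum>t=1..m. edge_vec i j a t) = 0"
  by (simp add: edge_vec_def sum_subtractf)

lemma shift_in_vertices: "x \<in> V \<Longrightarrow> i \<in> {1..m} \<Longrightarrow> j \<in> {1..m} \<Longrightarrow> shift x i j a \<in> V"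
  by (metis translate_in_vertices sum_edge_vec dvd_0_right)

lemma translate_zero: "x \<in> V \<Longrightarrow> translate x (\<lambda>_. 0) = x"
  by (auto simp: translate_def vertex_coord_mod vertex_coord_outside)

lemma translate_diff: "x \<in> V \<Longrightarrow> y \<in> V \<Longrightarrow> translate x (\<lambda>i. y i - x i) = y"
  by (auto simp: translate_def vertex_coord_mod vertex_coord_outside)

lemma translate_cong:
  "(\<And>i. i \<in> {1..m} \<Longrightarrow> int n dvd (\<delta> i - \<delta>' i)) \<Longrightarrow> translate x \<delta> = translate x \<delta>'"
  unfolding translate_def by (rule ext) (simp add: mod_eq_dvd_iff)

lemma diffs_translate:
  "diffs (translate x \<delta>) (translate x \<delta>') = {i \<in> {1..m}. \<not> int n dvd (\<delta> i - \<delta>' i)}"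
  by (auto simp: diffs_def mod_eq_dvd_iff)

lemma diffs_translate_right:
  "x \<in> V \<Longrightarrow> diffs x (translate x \<delta>) = {i \<in> {1..m}. \<not> int n dvd \<delta> i}"
  using diffs_translate[of x "\<lambda>_. 0" \<delta>] by (simp add: translate_zero)

lemma dvd_sum_translate_iff:
  assumes "S \<subseteq> {1..m}"
  shows "int n dvd (\<Sum>t\<in>S. translate x \<delta>' t - translate x \<delta> t) \<longleftrightarrow> int n dvd (\<Sum>t\<in>S. \<delta>' t - \<delta> t)"
proof -
  have "int n dvd ((\<Sum>t\<in>S. translate x \<delta>' t - translate x \<delta> t) - (\<Sum>t\<in>S. \<delta>' t - \<delta> t))"
    (is "int n dvd (?A - ?B)")
  proof -
    have "(\<Sum>t\<in>S. translate x \<delta>' t - translate x \<delta> t) - (\<Sum>t\<in>S. \<delta>' t - \<delta> t)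
        = (\<Sum>t\<in>S. ((x t + \<delta>' t) mod int n - (x t + \<delta>' t)) - ((x t + \<delta> t) mod int n - (x t + \<delta> t)))"
      using assms by (auto simp: sum_subtractf[symmetric] intro!: sum.cong)
    also have "int n dvd \<dots>"
    proof -
      have self: "int n dvd (A mod int n - A)" for A
        by (simp add: mod_eq_dvd_iff[symmetric])
      then show ?thesis
        by (blast intro: dvd_sum dvd_diff)
    qed
    finally show ?thesis .
  qed
  then show ?thesis
    using dvd_add_right_iff[of "int n" "?A - ?B" ?B] by simp
qed

lemma diffs_shift:
  assumes "x \<in> V" "i \<in> {1..m}" "j \<in> {1..m}" "i \<noteq> j" "\<not> int n dvd a"
  shows "diffs x (shift x i j a) = {i, j}"
  using assms by (auto simp: diffs_translate_right edge_vec_def)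

lemma adj_shift:
  "x \<in> V \<Longrightarrow> i \<in> {1..m} \<Longrightarrow> j \<in> {1..m} \<Longrightarrow> i \<noteq> j \<Longrightarrow> \<not> int n dvd a \<Longrightarrow> adj x (shift x i j a)"
  by (simp add: adj_iff_card_diffs diffs_shift)

lemma eq_shift_of_diffs_subset:
  assumes "x \<in> V" "y \<in> V" "i \<in> {1..m}" "j \<in> {1..m}" "i \<noteq> j" "diffs x y \<subseteq> {i, j}"
  shows "y = shift x i j (y i - x i)"
proof -
  have sum: "int n dvd (y i - x i + (y j - x j))"
    using sum_diffs_dvd[OF assms(1,2,6)] assms(3-5) by simp
  have "int n dvd (y k - x k - edge_vec i j (y i - x i) k)" if "k \<in> {1..m}" for k
  proof -
    consider "k = i" | "k = j" | "k \<noteq> i" "k \<noteq> j"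
      by blast
    then show ?thesis
    proof cases
      case 2
      then have "y k - x k - edge_vec i j (y i - x i) k = y i - x i + (y j - x j)"
        using assms(5) by (simp add: edge_vec_def)
      then show ?thesis
        using sum by simp
    next
      case 3
      then have "y k = x k"
        using assms(6) that by (auto simp: diffs_def)
      then show ?thesis
        using 3 by (simp add: edge_vec_def)
    qed (use assms(5) in \<open>simp add: edge_vec_def\<close>)
  qed
  then have "translate x (\<lambda>k. y k - x k) = shift x i j (y i - x i)"
    by (rule translate_cong)
  then show ?thesis
    by (simp only: translate_diff[OF assms(1,2)])
qed

lemma mem_diffs_imp_not_dvd: "x \<in> V \<Longrightarrow> y \<in> V \<Longrightarrow> i \<in> diffs x y \<Longrightarrow> \<not> int n dvd (y i - x i)"
  by (metis mem_diffs_iff vertex_coord_eq_iff)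

lemma diffs_triangle: "diffs y z \<subseteq> diffs x y \<union> diffs x z"
  by (auto simp: diffs_def)

lemma diffs_diff_subset: "diffs x y - diffs x z \<subseteq> diffs y z"
  by (auto simp: diffs_def)

lemma adj_of_same_direction:
  assumes "x \<in> V" "y \<in> V" "z \<in> V" "adj x y" "diffs x z = diffs x y" "y \<noteq> z"
  shows "adj y z"
proof -
  have "diffs y z \<subseteq> diffs x y"
    using diffs_triangle[of y z x] assms(5) by simp
  then have "card (diffs y z) \<le> 2"
    using assms(4) by (metis adj_iff_card_diffs card_mono finite_diffs)
  moreover have "diffs y z \<noteq> {}"
    using diffs_empty_iff assms(2,3,6) by simp
  then have "card (diffs y z) \<noteq> 0"
    by simp
  moreover have "card (diffs y z) \<noteq> 1"
    using card_diffs_ne_1 assms(2,3) by simp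
  ultimately show ?thesis
    unfolding adj_iff_card_diffs by linarith
qed

lemma not_adj_of_disjoint_directions:
  assumes "adj x y" "adj x z" "diffs x y \<inter> diffs x z = {}"
  shows "\<not> adj y z"
proof -
  have "diffs x y \<union> diffs x z \<subseteq> diffs y z"
    using assms(3) unfolding disjoint_iff by (auto simp: mem_diffs_iff)
  moreover have "card (diffs x y \<union> diffs x z) = 4"
    using assms by (simp add: adj_iff_card_diffs card_Un_disjoint)
  ultimately have "4 \<le> card (diffs y z)"
    by (metis card_mono finite_diffs)
  then show ?thesis
    by (simp add: adj_iff_card_diffs)
qed

lemma not_adj_of_three_diffs:
  assumes "a \<in> diffs x y" "b \<in> diffs x y" "c \<in> diffs x y" "distinct [a, b, c]"
  shows "\<not> adj x y"
proof -
  have "card {a, b, c} \<le> card (diffs x y)"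
    using assms(1-3) by (intro card_mono) auto
  then show ?thesis
    using assms(4) by (simp add: adj_iff_card_diffs)
qed

lemma triangle_turn:
  assumes "x \<in> V" "y \<in> V" "w \<in> V" "adj x y" "adj x w" "adj y w" "diffs x w \<noteq> diffs x y"
  obtains p q k a where "p \<in> {1..m}" "q \<in> {1..m}" "k \<in> {1..m}" "distinct [p, q, k]"
    "\<not> int n dvd a" "y = shift x p q a" "w = shift x p k a"
proof -
  have "diffs x y \<inter> diffs x w \<noteq> {}"
    using not_adj_of_disjoint_directions assms(4-6) by blast
  then obtain p where p: "p \<in> diffs x y" "p \<in> diffs x w"
    by blast
  obtain q where q: "q \<noteq> p" "diffs x y = {p, q}"
    using card_2_obtain_other assms(4) p(1) by (metis adj_iff_card_diffs)
  obtain k where k: "k \<noteq> p" "diffs x w = {p, k}"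
    using card_2_obtain_other assms(5) p(2) by (metis adj_iff_card_diffs)
  have "k \<noteq> q"
    using assms(7) q k by auto
  have in_m: "p \<in> {1..m}" "q \<in> {1..m}" "k \<in> {1..m}"
    using diffs_subset q k by blast+
  have "q \<in> diffs x y" "q \<notin> diffs x w" "k \<in> diffs x w" "k \<notin> diffs x y"
    using q k \<open>k \<noteq> q\<close> by auto
  then have "q \<in> diffs y w" "k \<in> diffs y w"
    by (auto simp: mem_diffs_iff)
  then have "diffs y w = {q, k}"
    using card_2_eqI[of "diffs y w" q k] assms(6) \<open>k \<noteq> q\<close> by (auto simp: adj_iff_card_diffs)
  then have "p \<notin> diffs y w"
    using q(1) k(1) by auto
  then have "w p = y p"
    using in_m by (auto simp: mem_diffs_iff)
  have nd: "\<not> int n dvd (y p - x p)"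
    using mem_diffs_imp_not_dvd assms(1,2) p(1) by blast
  have y_eq: "y = shift x p q (y p - x p)"
    using eq_shift_of_diffs_subset[OF assms(1,2) in_m(1,2) q(1)[symmetric]] q(2) by simp
  have w_eq: "w = shift x p k (y p - x p)"
    using eq_shift_of_diffs_subset[OF assms(1,3) in_m(1,3) k(1)[symmetric]] k(2) \<open>w p = y p\<close>
    by simp
  show ?thesis
    using q(1) k(1) \<open>k \<noteq> q\<close> by (intro that[OF in_m _ nd y_eq w_eq]) auto
qed

lemma adj_shift_shift:
  assumes "x \<in> V" "j \<in> {1..m}" "k \<in> {1..m}" "j \<noteq> k" "\<not> int n dvd a"
  shows "adj (shift x i j a) (shift x i k a)"
proof -
  have "diffs (shift x i j a) (shift x i k a) = {j, k}"
    using assms by (auto simp: diffs_translate edge_vec_def)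
  then show ?thesis
    using assms(4) by (simp add: adj_iff_card_diffs)
qed

lemma dvd_diff_of_adj_shifts:
  assumes "X \<in> V" "p \<in> {1..m}" "q \<in> {1..m}" "r \<in> {1..m}" "distinct [p, q, r]"
    "\<not> int n dvd \<alpha>" "\<not> int n dvd \<beta>" "adj (shift X p q \<alpha>) (shift X p r \<beta>)"
  shows "int n dvd (\<alpha> - \<beta>)"
proof (rule ccontr)
  assume "\<not> int n dvd (\<alpha> - \<beta>)"
  then have "p \<in> diffs (shift X p q \<alpha>) (shift X p r \<beta>)" "q \<in> diffs (shift X p q \<alpha>) (shift X p r \<beta>)"
    "r \<in> diffs (shift X p q \<alpha>) (shift X p r \<beta>)"
    unfolding diffs_translate using assms(2-7) by (auto simp: edge_vec_def)
  then show False
    using not_adj_of_three_diffs assms(5,8) by blast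
qed

lemma double_dvd_of_pair_triangle:
  assumes V: "X \<in> V" "P \<in> V" "Q \<in> V" "R \<in> V"
    and in_m: "p \<in> {1..m}" "q \<in> {1..m}" "r \<in> {1..m}" and "distinct [p, q, r]"
    and dirs: "diffs X P = {p, q}" "diffs X Q = {p, r}" "diffs X R = {q, r}"
    and adj: "adj P Q" "adj P R" "adj Q R"
  shows "int n dvd (2 * (P p - X p))"
proof -
  define \<alpha> \<beta> \<gamma> where "\<alpha> = P p - X p" and "\<beta> = Q p - X p" and "\<gamma> = R q - X q"
  have P: "P = shift X p q \<alpha>" "P = shift X q p (- \<alpha>)"
    using eq_shift_of_diffs_subset[OF V(1,2) in_m(1,2)] assms(8) dirs(1)
    by (simp_all add: \<alpha>_def edge_vec_swap[of p q])
  have Q: "Q = shift X p r \<beta>" "Q = shift X r p (- \<beta>)"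
    using eq_shift_of_diffs_subset[OF V(1,3) in_m(1,3)] assms(8) dirs(2)
    by (simp_all add: \<beta>_def edge_vec_swap[of p r])
  have R: "R = shift X q r \<gamma>" "R = shift X r q (- \<gamma>)"
    using eq_shift_of_diffs_subset[OF V(1,4) in_m(2,3)] assms(8) dirs(3)
    by (simp_all add: \<gamma>_def edge_vec_swap[of q r])
  have nd: "\<not> int n dvd \<alpha>" "\<not> int n dvd \<beta>" "\<not> int n dvd \<gamma>"
    using mem_diffs_imp_not_dvd V dirs by (auto simp: \<alpha>_def \<beta>_def \<gamma>_def)
  have PQ: "int n dvd (\<alpha> - \<beta>)"
    using dvd_diff_of_adj_shifts[of X p q r \<alpha> \<beta>] V(1) in_m assms(8) nd adj(1) P(1) Q(1) by simp
  have PR: "int n dvd (- \<alpha> - \<gamma>)"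
    using dvd_diff_of_adj_shifts[of X q p r "- \<alpha>" \<gamma>] V(1) in_m assms(8) nd adj(2) P(2) R(1)
    by simp
  have QR: "int n dvd (\<gamma> - \<beta>)"
    using dvd_diff_of_adj_shifts[of X r p q "- \<beta>" "- \<gamma>"] V(1) in_m assms(8) nd adj(3) Q(2) R(2)
    by simp
  have "2 * (P p - X p) = (\<alpha> - \<beta>) - (- \<alpha> - \<gamma>) - (\<gamma> - \<beta>)"
    by (simp add: \<alpha>_def)
  then show ?thesis
    using dvd_diff[OF dvd_diff[OF PQ PR] QR] by simp
qed

lemma closer_neighbour:
  assumes "x \<in> V" "y \<in> V" "x \<noteq> y"
  obtains u where "u \<in> V" "adj x u" "\<And>i. x i = y i \<Longrightarrow> u i = x i"
    "card (diffs u y) < card (diffs x y)"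
proof -
  obtain j where "j \<in> diffs x y"
    using diffs_empty_iff assms by blast
  moreover have "diffs x y \<noteq> {j}"
    using card_diffs_ne_1 assms(1,2) by (metis is_singletonI is_singleton_altdef)
  ultimately obtain k where jk: "j \<in> diffs x y" "k \<in> diffs x y" "j \<noteq> k"
    by blast
  then have in_m: "j \<in> {1..m}" "k \<in> {1..m}"
    using diffs_subset by blast+
  define u where "u = shift x j k (y j - x j)"
  have "\<not> int n dvd (y j - x j)"
    using mem_diffs_imp_not_dvd assms(1,2) jk(1) by blast
  then have "u \<in> V" "adj x u"
    using shift_in_vertices adj_shift assms(1) in_m jk(3) by (simp_all add: u_def)
  moreover have fixed: "u i = x i" if "x i = y i" for i
  proof (cases "i \<in> {1..m}")
    case True
    then have "i \<noteq> j" "i \<noteq> k"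
      using that jk by (auto simp: mem_diffs_iff)
    then show ?thesis
      using True vertex_coord_mod[OF assms(1) True] by (simp add: u_def edge_vec_def)
  next
    case False
    then show ?thesis
      using vertex_coord_outside[OF assms(1) False] by (auto simp: u_def translate_def)
  qed
  moreover have closer: "diffs u y \<subseteq> diffs x y - {j}"
  proof
    fix i assume i: "i \<in> diffs u y"
    have "u j = y j"
      using in_m jk(3) vertex_coord_mod[OF assms(2)] by (simp add: u_def edge_vec_def)
    then show "i \<in> diffs x y - {j}"
      using i fixed[of i] by (auto simp: diffs_def)
  qed
  then have "card (diffs u y) < card (diffs x y)"
    using card_mono[OF _ closer] card_Diff1_less[OF finite_diffs jk(1)] by simp
  ultimately show ?thesis
    using that by blast
qed

lemma fixed_coord_induct:
  assumes "x \<in> V" "y \<in> V" "x i = y i" "P x"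
    and step: "\<And>u v. u \<in> V \<Longrightarrow> v \<in> V \<Longrightarrow> adj u v \<Longrightarrow> u i = v i \<Longrightarrow> P u \<Longrightarrow> P v"
  shows "P y"
  using assms(1,3,4)
proof (induction "card (diffs x y)" arbitrary: x rule: less_induct)
  case less
  show ?case
  proof (cases "x = y")
    case False
    then obtain u where "u \<in> V" "adj x u" "u i = x i" "card (diffs u y) < card (diffs x y)"
      using closer_neighbour less.prems(1,2) assms(2) by metis
    then show ?thesis
      using less step[of x u] by simp
  qed (use less.prems in simp)
qed

section \<open>Common neighbours\<close>

abbreviation N :: "(nat \<Rightarrow> int) \<Rightarrow> (nat \<Rightarrow> int) set" where
  "N \<equiv> nbrs V adj"

lemma common_nbr_of_three_diffs:
  assumes "u \<in> V" "w \<in> V" "diffs u w = {p, q, r}" "distinct [p, q, r]"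
  defines "z \<equiv> shift u p q (w p - u p)"
  shows "z \<in> N u \<inter> N w" "diffs u z = {p, q}" "diffs z w = {q, r}"
proof -
  define \<delta> where "\<delta> t = w t - u t" for t
  have in_m: "p \<in> {1..m}" "q \<in> {1..m}" "r \<in> {1..m}"
    using assms(3) diffs_subset by blast+
  have nd: "\<not> int n dvd \<delta> p" "\<not> int n dvd \<delta> r"
    using mem_diffs_imp_not_dvd assms(1-3) by (auto simp: \<delta>_def)
  have "int n dvd (\<delta> p + \<delta> q + \<delta> r)"
    using sum_diffs_dvd[OF assms(1,2), of "{p, q, r}"] assms(3,4) in_m by (simp add: \<delta>_def add.assoc)
  then have "\<not> int n dvd (\<delta> p + \<delta> q)"
    using nd(2) dvd_add_right_iff[of "int n" "\<delta> p + \<delta> q" "\<delta> r"] by blast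
  moreover have "- \<delta> p - \<delta> q = - (\<delta> p + \<delta> q)"
    by simp
  ultimately have nd_pq: "\<not> int n dvd (- \<delta> p - \<delta> q)"
    by (simp only: dvd_minus_iff not_False_eq_True)
  have supp: "t = p \<or> t = q \<or> t = r" if "\<not> int n dvd \<delta> t" "t \<in> {1..m}" for t
  proof -
    have "t \<in> diffs u w"
      using that by (auto simp: \<delta>_def mem_diffs_iff)
    then show ?thesis
      using assms(3) by simp
  qed
  have w: "w = translate u \<delta>"
    using translate_diff[OF assms(1,2)] by (simp add: \<delta>_def[abs_def])
  have z: "z = shift u p q (\<delta> p)"
    by (simp add: z_def \<delta>_def)
  show Duz: "diffs u z = {p, q}"
    using diffs_shift assms(1,4) in_m nd(1) by (simp add: z)
  show Dzw: "diffs z w = {q, r}"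
    unfolding z w diffs_translate using in_m assms(4) nd nd_pq by (auto simp: edge_vec_def dest: supp)
  have "z \<in> V"
    using shift_in_vertices assms(1) in_m by (simp add: z)
  then show "z \<in> N u \<inter> N w"
    using Duz Dzw assms(4) by (auto simp: nbrs_def adj_iff_card_diffs diffs_commute[of w z])
qed

lemma card_common_nbrs_ge_6:
  assumes "u \<in> V" "w \<in> V" "card (diffs u w) = 3"
  shows "6 \<le> card (N u \<inter> N w)"
proof -
  obtain a b c where abc: "diffs u w = {a, b, c}" "distinct [a, b, c]"
    using assms(3) by (auto simp: card_3_iff)
  define z where "z = (\<lambda>(p, q). shift u p q (w p - u p))"
  define P where "P = {(a, b), (b, a), (a, c), (c, a), (b, c), (c, b)}"
  have props: "z (p, q) \<in> N u \<inter> N w \<and> diffs u (z (p, q)) = {p, q} \<and>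
      diffs u (z (p, q)) \<inter> diffs (z (p, q)) w = {q}"
    if "(p, q) \<in> P" for p q
  proof -
    obtain r where "diffs u w = {p, q, r}" "distinct [p, q, r]"
      using \<open>(p, q) \<in> P\<close> abc by (auto simp: P_def insert_commute)
    then show ?thesis
      using common_nbr_of_three_diffs[OF assms(1,2)] by (auto simp: z_def)
  qed
  have "inj_on z P"
  proof (rule inj_onI)
    fix s t assume "s \<in> P" "t \<in> P" "z s = z t"
    moreover obtain p q p' q' where st: "s = (p, q)" "t = (p', q')"
      by fastforce
    ultimately have "diffs u (z (p, q)) = {p, q}" "diffs u (z (p, q)) \<inter> diffs (z (p, q)) w = {q}"
      "diffs u (z (p, q)) = {p', q'}" "diffs u (z (p, q)) \<inter> diffs (z (p, q)) w = {q'}"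
      using props by metis+
    then show "s = t"
      using st by (auto simp: doubleton_eq_iff)
  qed
  moreover have "card P = 6"
    using abc(2) by (simp add: P_def)
  moreover have "z ` P \<subseteq> N u \<inter> N w"
    using props by auto
  ultimately show ?thesis
    using card_mono[of "N u \<inter> N w" "z ` P"] finite_vertices nbrs_subset card_image
    by (metis finite_Int finite_subset)
qed

lemma common_nbr_of_four_diffs:
  assumes "u \<in> V" "w \<in> V" "card (diffs u w) = 4" "z \<in> N u \<inter> N w"
  shows "diffs u z \<subseteq> diffs u w" "z = (\<lambda>t. if t \<in> diffs u z then w t else u t)"
proof -
  have zV: "z \<in> V" and card_uz: "card (diffs u z) = 2" and card_zw: "card (diffs z w) = 2"
    using assms(4) by (auto simp: nbrs_def adj_iff_card_diffs diffs_commute[of z w])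
  have "diffs u w \<subseteq> diffs u z \<union> diffs z w"
    using diffs_triangle[of u w z] by (simp add: diffs_commute)
  then have "4 \<le> card (diffs u z \<union> diffs z w)"
    using assms(3) card_mono by (metis finite_Un finite_diffs)
  then have "card (diffs u z \<inter> diffs z w) = 0"
    using card_Un_Int[OF finite_diffs finite_diffs, of u z z w] card_uz card_zw by linarith
  then have disj: "diffs u z \<inter> diffs z w = {}"
    by simp
  show "diffs u z \<subseteq> diffs u w"
    using disj unfolding disjoint_iff by (auto simp: mem_diffs_iff)
  show "z = (\<lambda>t. if t \<in> diffs u z then w t else u t)"
  proof
    fix t
    show "z t = (if t \<in> diffs u z then w t else u t)"
      using disj vertex_coord_outside[OF zV, of t] vertex_coord_outside[OF assms(1), of t]
      unfolding disjoint_iff by (auto simp: mem_diffs_iff)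
  qed
qed

lemma card_common_nbrs_le_4:
  assumes "u \<in> V" "w \<in> V" "diffs u w = {i, j, k, l}" "distinct [i, j, k, l]"
    "\<not> int n dvd (\<Sum>t\<in>{i, j}. w t - u t)" "\<not> int n dvd (\<Sum>t\<in>{k, l}. w t - u t)"
  shows "card (N u \<inter> N w) \<le> 4"
proof -
  define g where "g S = (\<lambda>t. if t \<in> S then w t else u t)" for S
  define F where "F = {{i, k}, {i, l}, {j, k}, {j, l}}"
  have sub: "N u \<inter> N w \<subseteq> g ` F"
  proof
    fix z assume z: "z \<in> N u \<inter> N w"
    have "card (diffs u w) = 4"
      using assms(3,4) by simp
    note merge = common_nbr_of_four_diffs[OF assms(1,2) this z]
    have "adj u z"
      using z by (simp add: nbrs_def)
    then obtain p q where pq: "diffs u z = {p, q}" "p \<noteq> q"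
      using adj_imp_diffs_eq by blast
    have "int n dvd (\<Sum>t\<in>{p, q}. z t - u t)"
      using sum_diffs_dvd[of u z "{p, q}"] assms(1) z pq diffs_subset[of u z] by (auto simp: nbrs_def)
    moreover have "(\<Sum>t\<in>{p, q}. z t - u t) = (\<Sum>t\<in>{p, q}. w t - u t)"
      using merge(2) pq(1) by (intro sum.cong) (auto dest: fun_cong)
    ultimately have "{p, q} \<noteq> {i, j}" "{p, q} \<noteq> {k, l}"
      using assms(5,6) by auto
    moreover have "{p, q} \<subseteq> {i, j, k, l}"
      using merge(1) pq(1) assms(3) by simp
    ultimately have "{p, q} \<in> F"
      using pq(2) assms(4) by (auto simp: F_def doubleton_eq_iff)
    moreover have "z = g {p, q}"
      using merge(2) pq(1) by (simp add: g_def)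
    ultimately show "z \<in> g ` F"
      by blast
  qed
  have "card (g ` F) \<le> 4"
    using card_image_le[of F g] by (simp add: F_def card_insert_if)
  then show ?thesis
    using card_mono[OF _ sub] by (simp add: F_def)
qed

lemma card_diffs_off_line:
  assumes "x \<in> V" "y \<in> V" "w \<in> V" "adj x y" "diffs x w = diffs x y" "w \<noteq> y"
    "u \<in> N x \<inter> N y" "diffs x u \<noteq> diffs x y"
  shows "card (diffs u w) = 3"
proof -
  have u: "u \<in> V" "adj x u" "adj y u"
    using assms(7) by (auto simp: nbrs_def)
  obtain p q k a where pqk: "p \<in> {1..m}" "q \<in> {1..m}" "k \<in> {1..m}" "distinct [p, q, k]"
    and a: "\<not> int n dvd a" and y: "y = shift x p q a" and u_eq: "u = shift x p k a"
    using triangle_turn[OF assms(1,2) u(1) assms(4) u(2,3) assms(8)] by blast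
  define b where "b = w p - x p"
  have "diffs x w \<subseteq> {p, q}"
    using assms(5) diffs_shift[OF assms(1) pqk(1,2)] pqk(4) a y by simp
  then have w: "w = shift x p q b"
    using eq_shift_of_diffs_subset[OF assms(1,3) pqk(1,2)] pqk(4) by (simp add: b_def)
  have "p \<in> diffs x w"
    using assms(5) diffs_shift[OF assms(1) pqk(1,2)] pqk(4) a y by simp
  then have "\<not> int n dvd b"
    using mem_diffs_imp_not_dvd assms(1,3) by (simp add: b_def)
  moreover have "\<not> int n dvd (a - b)"
  proof
    assume "int n dvd (a - b)"
    then have "shift x p q a = shift x p q b"
      by (intro translate_cong) (simp add: edge_vec_diff dvd_edge_vec)
    then show False
      using assms(6) w y by simp
  qed
  ultimately have "diffs u w = {p, k, q}"
    unfolding u_eq w diffs_translate using pqk a by (auto simp: edge_vec_def)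
  then show ?thesis
    using pqk(4) by simp
qed

lemma line_triangle_of_same_direction:
  assumes "x \<in> V" "y \<in> V" "w \<in> V" "adj x y" "diffs x w = diffs x y" "w \<noteq> y"
  shows "line_triangle V adj x y w"
  unfolding line_triangle_def
proof (intro conjI ballI impI)
  fix u assume u: "u \<in> N x \<inter> N y" "u \<noteq> w" "\<not> adj u w"
  have "diffs x u \<noteq> diffs x y"
    using adj_of_same_direction[of x u w] u assms by (auto simp: nbrs_def)
  then have "card (diffs u w) = 3"
    using card_diffs_off_line assms u(1) by blast
  then show "5 \<le> card (N u \<inter> N w)"
    using card_common_nbrs_ge_6[of u w] u(1) assms(3) by (simp add: nbrs_def)
next
  fix u v assume uv: "u \<in> N x \<inter> N y" "v \<in> N x \<inter> N y" "adj u w" "adj v w" "u \<noteq> v"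
  have "diffs x u = diffs x y" "diffs x v = diffs x y"
    by (rule ccontr, use card_diffs_off_line[OF assms] uv in \<open>simp add: adj_iff_card_diffs\<close>)+
  then show "adj u v"
    using adj_of_same_direction[of x u v] uv assms(1) by (auto simp: nbrs_def)
qed

end

locale csr_large = csr +
  assumes m_gt_3: "3 < m" and n_gt_2: "2 < n"
begin

lemma not_dvd_1: "\<not> int n dvd 1"
  using n_gt_2 by (auto dest: zdvd_imp_le)

lemma not_dvd_2: "\<not> int n dvd 2"
  using n_gt_2 by (auto dest: zdvd_imp_le)

lemma not_line_triangle_turn_if_not_dvd_2a:
  assumes "x \<in> V" "p \<in> {1..m}" "q \<in> {1..m}" "k \<in> {1..m}" "distinct [p, q, k]"
    "\<not> int n dvd (2 * a)"
  shows "\<not> line_triangle V adj x (shift x p q a) (shift x p k a)"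
proof
  assume lt: "line_triangle V adj x (shift x p q a) (shift x p k a)"
  have a: "\<not> int n dvd a" "\<not> int n dvd (a + a)"
    using assms(6) dvd_mult[of "int n" a 2] by (metis mult_2)+
  obtain l where l: "l \<in> {1..m}" "l \<notin> {p, q, k}"
    using exists_fourth[of "{1..m}" p q k] m_gt_3 by auto
  define y w u where "y = shift x p q a" and "w = shift x p k a" and "u = shift x l q a"
  have V: "y \<in> V" "w \<in> V" "u \<in> V"
    using shift_in_vertices assms(1-4) l(1) by (simp_all add: y_def w_def u_def)
  have "diffs y u = {p, l}"
    unfolding y_def u_def diffs_translate using assms(2-5) l a by (auto simp: edge_vec_def)
  then have u: "u \<in> N x \<inter> N y"
    using adj_shift[OF assms(1) l(1) assms(3)] V l(2) a(1) assms(5)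
    by (auto simp: nbrs_def u_def adj_iff_card_diffs)
  have Duw: "diffs u w = {p, q, k, l}"
    unfolding w_def u_def diffs_translate using assms(2-5) l a by (auto simp: edge_vec_def)
  then have "\<not> adj u w" "u \<noteq> w"
    using assms(5) l(2) by (auto simp: adj_iff_card_diffs)
  moreover have "line_triangle V adj x y w"
    using lt by (simp only: y_def w_def)
  ultimately have "5 \<le> card (N u \<inter> N w)"
    using u unfolding line_triangle_def by blast
  moreover have "card (N u \<inter> N w) \<le> 4"
  proof (rule card_common_nbrs_le_4[OF V(3,2) Duw])
    have "int n dvd (\<Sum>t\<in>S. w t - u t) \<longleftrightarrow>
        int n dvd (\<Sum>t\<in>S. edge_vec p k a t - edge_vec l q a t)" if "S \<subseteq> {1..m}" for S
      unfolding w_def u_def using that by (rule dvd_sum_translate_iff)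
    note sum_iff = this
    show "\<not> int n dvd (\<Sum>t\<in>{p, q}. w t - u t)"
      using sum_iff[of "{p, q}"] assms(2-6) l a by (simp add: edge_vec_def)
    show "\<not> int n dvd (\<Sum>t\<in>{k, l}. w t - u t)"
      using sum_iff[of "{k, l}"] assms(2-6) l a by (simp add: edge_vec_def)
  qed (use assms(5) l(2) in auto)
  ultimately show False
    by simp
qed

lemma not_line_triangle_turn_if_dvd_2a:
  assumes "x \<in> V" "p \<in> {1..m}" "q \<in> {1..m}" "k \<in> {1..m}" "distinct [p, q, k]"
    "\<not> int n dvd a" "int n dvd (2 * a)"
  shows "\<not> line_triangle V adj x (shift x p q a) (shift x p k a)"
proof
  assume lt: "line_triangle V adj x (shift x p q a) (shift x p k a)"
  have a: "int n dvd (a + a)"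
    using assms(7) by (metis mult_2)
  obtain l where l: "l \<in> {1..m}" "l \<notin> {p, q, k}"
    using exists_fourth[of "{1..m}" p q k] m_gt_3 by auto
  define y w u v where "y = shift x p q a" and "w = shift x p k a" and "u = shift x k q a"
    and "v = shift x p l a"
  have V: "y \<in> V" "w \<in> V" "u \<in> V" "v \<in> V"
    using shift_in_vertices assms(1-4) l(1) by (simp_all add: y_def w_def u_def v_def)
  have "diffs y u = {p, k}" "diffs y v = {q, l}"
    unfolding y_def u_def v_def diffs_translate using assms(2-6) l by (auto simp: edge_vec_def)
  then have "u \<in> N x \<inter> N y" "v \<in> N x \<inter> N y"
    using adj_shift[OF assms(1) assms(4,3)] adj_shift[OF assms(1) assms(2) l(1)] V assms(5,6) l(2)
    by (auto simp: nbrs_def u_def v_def adj_iff_card_diffs)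
  moreover have "diffs u w = {q, p}" "diffs v w = {l, k}" "diffs u v = {k, q, p, l}"
    unfolding w_def u_def v_def diffs_translate using assms(2-6) l a by (auto simp: edge_vec_def)
  then have "adj u w" "adj v w" "\<not> adj u v" "u \<noteq> v"
    using assms(5) l(2) by (auto simp: adj_iff_card_diffs)
  moreover have "line_triangle V adj x y w"
    using lt by (simp only: y_def w_def)
  ultimately show False
    unfolding line_triangle_def by blast
qed

theorem line_triangle_iff_same_direction:
  assumes "x \<in> V" "y \<in> V" "w \<in> V" "adj x y" "adj x w" "adj y w"
  shows "line_triangle V adj x y w \<longleftrightarrow> diffs x w = diffs x y"
proof
  assume lt: "line_triangle V adj x y w"
  show "diffs x w = diffs x y"
  proof (rule ccontr)
    assume "diffs x w \<noteq> diffs x y"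
    then obtain p q k a where "p \<in> {1..m}" "q \<in> {1..m}" "k \<in> {1..m}" "distinct [p, q, k]"
      "\<not> int n dvd a" "y = shift x p q a" "w = shift x p k a"
      using triangle_turn[OF assms] by blast
    then show False
      using lt not_line_triangle_turn_if_not_dvd_2a not_line_triangle_turn_if_dvd_2a assms(1)
      by (cases "int n dvd (2 * a)") auto
  qed
qed (use line_triangle_of_same_direction adj_imp_neq assms in blast)

lemma same_direction_iff_line_triangle:
  assumes "x \<in> V" "y \<in> V" "z \<in> V" "adj x y" "adj x z" "y \<noteq> z"
  shows "diffs x y = diffs x z \<longleftrightarrow> adj y z \<and> line_triangle V adj x y z"
  using line_triangle_iff_same_direction[OF assms(1-5)] adj_of_same_direction[OF assms(1-4) _ assms(6)]
  by metis

section \<open>Functionals on zero-sum vectors\<close>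

context
  fixes h :: "nat \<Rightarrow> int \<Rightarrow> int"
  assumes sum_dvd: "\<And>x. x \<in> V \<Longrightarrow> int n dvd (\<Sum>i=1..m. h i (x i))"
    and zero: "\<And>i. i \<in> {1..m} \<Longrightarrow> h i 0 = 0"
    and periodic: "\<And>i t. i \<in> {1..m} \<Longrightarrow> h i (t mod int n) = h i t"
begin

lemma zero_sum_functional_dvd:
  assumes "int n dvd (\<Sum>i=1..m. \<delta> i)" "S \<subseteq> {1..m}" "\<And>i. i \<in> {1..m} \<Longrightarrow> i \<notin> S \<Longrightarrow> \<delta> i = 0"
  shows "int n dvd (\<Sum>i\<in>S. h i (\<delta> i))"
proof -
  have "int n dvd (\<Sum>i=1..m. h i (translate (\<lambda>_. 0) \<delta> i))"
    using sum_dvd translate_in_vertices[OF zero_vertex assms(1)] by blast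
  also have "(\<Sum>i=1..m. h i (translate (\<lambda>_. 0) \<delta> i)) = (\<Sum>i=1..m. h i (\<delta> i))"
    using periodic by (intro sum.cong) simp_all
  also have "\<dots> = (\<Sum>i\<in>S. h i (\<delta> i))"
    using assms(2,3) zero by (intro sum.mono_neutral_right) auto
  finally show ?thesis .
qed

lemma zero_sum_functional_pair:
  assumes "i \<in> {1..m}" "j \<in> {1..m}" "i \<noteq> j"
  shows "int n dvd (h i t + h j (- t))"
  using zero_sum_functional_dvd[of "edge_vec i j t" "{i, j}"] sum_edge_vec[OF assms(1,2)] assms
  by (auto simp: edge_vec_def)

lemma zero_sum_functional_indep:
  assumes "i \<in> {1..m}" "k \<in> {1..m}"
  shows "int n dvd (h i t - h k t)"
proof -
  obtain j where "j \<in> {1..m}" "j \<notin> {i, k}"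
    using exists_fourth[of "{1..m}" i k k] m_gt_3 by auto
  then show ?thesis
    using dvd_diff[OF zero_sum_functional_pair[of i j t] zero_sum_functional_pair[of k j t]] assms
    by auto
qed

lemma zero_sum_functional_add: "int n dvd (h 1 s + h 1 t - h 1 (s + t))"
proof -
  have in_m: "1 \<in> {1..m}" "2 \<in> {1..m}" "3 \<in> {1..m}"
    using m_gt_3 by auto
  define \<delta> where "\<delta> u = edge_vec 1 3 s u + edge_vec 2 3 t u" for u
  have "int n dvd (\<Sum>u\<in>{1, 2, 3}. h u (\<delta> u))"
    using in_m sum_edge_vec by (intro zero_sum_functional_dvd) (auto simp: \<delta>_def sum.distrib edge_vec_def)
  then have A: "int n dvd (h 1 s + h 2 t + h 3 (- s - t))"
    by (simp add: \<delta>_def edge_vec_def add.assoc)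
  have B: "int n dvd (h 2 t - h 1 t)" and C: "int n dvd (h 3 (- s - t) - h 1 (- s - t))"
    using zero_sum_functional_indep in_m by blast+
  have E1: "int n dvd (h 1 (s + t) + h 2 (- s - t))"
    using zero_sum_functional_pair[of 1 2 "s + t"] in_m by (simp add: algebra_simps)
  have E2: "int n dvd (h 2 (- s - t) - h 1 (- s - t))"
    using zero_sum_functional_indep in_m by blast
  have E: "int n dvd (h 1 (s + t) + h 1 (- s - t))"
    using dvd_diff[OF E1 E2] by (simp add: algebra_simps)
  have "int n dvd (h 1 s + h 2 t + h 3 (- s - t) - (h 2 t - h 1 t)
      - (h 3 (- s - t) - h 1 (- s - t)) - (h 1 (s + t) + h 1 (- s - t)))"
    using dvd_diff[OF dvd_diff[OF dvd_diff[OF A B] C] E] .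
  then show ?thesis
    by (simp add: algebra_simps)
qed

lemma zero_sum_functional_linear:
  assumes "i \<in> {1..m}"
  shows "int n dvd (h i (int k) - int k * h 1 1)"
proof -
  have lin: "int n dvd (h 1 (int k) - int k * h 1 1)"
  proof (induction k)
    case (Suc k)
    have "h 1 (int (Suc k)) - int (Suc k) * h 1 1
        = (h 1 (int k) - int k * h 1 1) - (h 1 (int k) + h 1 1 - h 1 (int k + 1))"
      by (simp add: algebra_simps)
    then show ?case
      using dvd_diff[OF Suc zero_sum_functional_add[of "int k" 1]] by simp
  qed (use zero m_gt_3 in simp)
  have "int n dvd (h i (int k) - h 1 (int k))"
    using zero_sum_functional_indep assms m_gt_3 by simp
  then show ?thesis
    using dvd_add[OF _ lin] by fastforce
qed

end

end

section \<open>Automorphisms preserve directions\<close>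

locale csr_aut = csr_large +
  fixes \<psi> :: "(nat \<Rightarrow> int) \<Rightarrow> nat \<Rightarrow> int"
  assumes bij: "bij_betw \<psi> V V"
    and adj_iff: "\<And>x y. x \<in> V \<Longrightarrow> y \<in> V \<Longrightarrow> adj (\<psi> x) (\<psi> y) \<longleftrightarrow> adj x y"
begin

lemma aut_in_vertices: "x \<in> V \<Longrightarrow> \<psi> x \<in> V"
  using bij bij_betwE by blast

lemma aut_eq_iff: "x \<in> V \<Longrightarrow> y \<in> V \<Longrightarrow> \<psi> x = \<psi> y \<longleftrightarrow> x = y"
  using bij by (meson bij_betw_imp_inj_on inj_on_eq_iff)

lemma aut_surj: "z \<in> V \<Longrightarrow> \<exists>y \<in> V. \<psi> y = z"
  using bij by (metis bij_betw_imp_surj_on imageE)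

lemma same_direction_iff_aut:
  assumes "x \<in> V" "y \<in> V" "z \<in> V" "adj x y" "adj x z"
  shows "diffs (\<psi> x) (\<psi> y) = diffs (\<psi> x) (\<psi> z) \<longleftrightarrow> diffs x y = diffs x z"
proof (cases "y = z")
  case False
  have "line_triangle V adj (\<psi> x) (\<psi> y) (\<psi> z) \<longleftrightarrow> line_triangle V adj x y z"
    using line_triangle_iso[of \<psi> V V adj adj, OF bij adj_iff] assms(1-3) by blast
  then show ?thesis
    using same_direction_iff_line_triangle[OF assms False]
      same_direction_iff_line_triangle[of "\<psi> x" "\<psi> y" "\<psi> z"]
      aut_in_vertices adj_iff aut_eq_iff assms False by simp
qed simp

definition image_dir :: "(nat \<Rightarrow> int) \<Rightarrow> nat \<Rightarrow> nat \<Rightarrow> nat set" where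
  "image_dir x i j = diffs (\<psi> x) (\<psi> (shift x i j 1))"

lemma image_dir_subset: "image_dir x i j \<subseteq> {1..m}"
  unfolding image_dir_def by (rule diffs_subset)

lemma shift_one:
  assumes "x \<in> V" "i \<in> {1..m}" "j \<in> {1..m}" "i \<noteq> j"
  shows "shift x i j 1 \<in> V" "adj x (shift x i j 1)" "diffs x (shift x i j 1) = {i, j}"
  using shift_in_vertices adj_shift diffs_shift assms not_dvd_1 by simp_all

lemma diffs_aut_eq_image_dir_iff:
  assumes "x \<in> V" "y \<in> V" "adj x y" "i \<in> {1..m}" "j \<in> {1..m}" "i \<noteq> j"
  shows "diffs (\<psi> x) (\<psi> y) = image_dir x i j \<longleftrightarrow> diffs x y = {i, j}"
  using same_direction_iff_aut[OF assms(1,2) shift_one(1)[OF assms(1,4-6)] assms(3)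
      shift_one(2)[OF assms(1,4-6)]] shift_one(3)[OF assms(1,4-6)]
  by (simp add: image_dir_def)

lemma image_dir_commute:
  assumes "x \<in> V" "i \<in> {1..m}" "j \<in> {1..m}" "i \<noteq> j"
  shows "image_dir x i j = image_dir x j i"
  using diffs_aut_eq_image_dir_iff[OF assms(1) shift_one(1,2)[OF assms(1,3,2)] assms(2-4)]
    shift_one(3)[OF assms(1,3,2)] assms(4)
  by (simp add: image_dir_def insert_commute)

lemma card_image_dir:
  assumes "x \<in> V" "i \<in> {1..m}" "j \<in> {1..m}" "i \<noteq> j"
  shows "card (image_dir x i j) = 2"
  using adj_iff[OF assms(1) shift_one(1)[OF assms]] shift_one(2)[OF assms]
  by (simp add: image_dir_def adj_iff_card_diffs)

lemma image_dir_eq_iff: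
  assumes "x \<in> V" "i \<in> {1..m}" "j \<in> {1..m}" "i \<noteq> j" "k \<in> {1..m}" "l \<in> {1..m}" "k \<noteq> l"
  shows "image_dir x i j = image_dir x k l \<longleftrightarrow> {i, j} = {k, l}"
  using diffs_aut_eq_image_dir_iff[OF assms(1) shift_one(1,2)[OF assms(1,5-7)] assms(2-4)]
    shift_one(3)[OF assms(1,5-7)]
  by (auto simp: image_dir_def)

lemma image_dir_meet:
  assumes "x \<in> V" "i \<in> {1..m}" "j \<in> {1..m}" "k \<in> {1..m}" "distinct [i, j, k]"
  shows "image_dir x i j \<inter> image_dir x i k \<noteq> {}"
proof
  assume disjoint: "image_dir x i j \<inter> image_dir x i k = {}"
  have "adj (shift x i j 1) (shift x i k 1)"
    using adj_shift_shift assms not_dvd_1 by simp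
  then have "adj (\<psi> (shift x i j 1)) (\<psi> (shift x i k 1))"
    using adj_iff shift_one(1) assms by simp
  moreover have "adj (\<psi> x) (\<psi> (shift x i j 1))" "adj (\<psi> x) (\<psi> (shift x i k 1))"
    using adj_iff shift_one(1,2) assms by simp_all
  ultimately show False
    using not_adj_of_disjoint_directions[of "\<psi> x" "\<psi> (shift x i j 1)" "\<psi> (shift x i k 1)"]
      disjoint unfolding image_dir_def by blast
qed

lemma image_dir_disjoint:
  assumes "x \<in> V" "i \<in> {1..m}" "j \<in> {1..m}" "k \<in> {1..m}" "l \<in> {1..m}" "distinct [i, j, k, l]"
  shows "image_dir x i j \<inter> image_dir x k l = {}"
proof (rule ccontr)
  assume "image_dir x i j \<inter> image_dir x k l \<noteq> {}"
  then obtain p where p: "p \<in> image_dir x i j" "p \<in> image_dir x k l"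
    by blast
  have "i \<noteq> j" "k \<noteq> l"
    using assms(6) by auto
  obtain q where q: "q \<noteq> p" "image_dir x i j = {p, q}"
    using card_2_obtain_other[OF card_image_dir[OF assms(1-3) \<open>i \<noteq> j\<close>] p(1)] by blast
  obtain r where r: "r \<noteq> p" "image_dir x k l = {p, r}"
    using card_2_obtain_other[OF card_image_dir[OF assms(1,4,5) \<open>k \<noteq> l\<close>] p(2)] by blast
  have "q \<noteq> r"
    using image_dir_eq_iff[OF assms(1-3) _ assms(4,5)] assms(6) q r by (auto simp: doubleton_eq_iff)
  have in_m: "p \<in> {1..m}" "q \<in> {1..m}" "r \<in> {1..m}"
    using q(2) r(2) image_dir_subset[of x i j] image_dir_subset[of x k l] by auto
  define X where "X = \<psi> x"
  have X: "X \<in> V"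
    using aut_in_vertices assms(1) by (simp add: X_def)
  obtain y where y: "y \<in> V" "\<psi> y = shift X p q 1"
    using aut_surj shift_one(1)[OF X in_m(1,2) q(1)[symmetric]] by blast
  obtain z where z: "z \<in> V" "\<psi> z = shift X p r 1"
    using aut_surj shift_one(1)[OF X in_m(1,3) r(1)[symmetric]] by blast
  have "adj x y"
    using adj_iff[OF assms(1) y(1)] y(2) shift_one(2)[OF X in_m(1,2) q(1)[symmetric]] by (simp add: X_def)
  have "adj x z"
    using adj_iff[OF assms(1) z(1)] z(2) shift_one(2)[OF X in_m(1,3) r(1)[symmetric]] by (simp add: X_def)
  moreover have "adj y z"
    using adj_iff[OF y(1) z(1)] y(2) z(2) adj_shift_shift[OF X in_m(2,3) \<open>q \<noteq> r\<close> not_dvd_1] by simp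
  moreover have "diffs x y = {i, j}"
    using diffs_aut_eq_image_dir_iff[OF assms(1) y(1) \<open>adj x y\<close> assms(2,3)] assms(6) y(2) q(2)
      shift_one(3)[OF X in_m(1,2) q(1)[symmetric]] by (simp add: X_def)
  moreover have "diffs x z = {k, l}"
    using diffs_aut_eq_image_dir_iff[OF assms(1) z(1) \<open>adj x z\<close> assms(4,5)] assms(6) z(2) r(2)
      shift_one(3)[OF X in_m(1,3) r(1)[symmetric]] by (simp add: X_def)
  ultimately show False
    using not_adj_of_disjoint_directions[of x y z] \<open>adj x y\<close> assms(6) by simp
qed

lemma image_dir_triangle_shift:
  assumes "x \<in> V" "i \<in> {1..m}" "j \<in> {1..m}" "k \<in> {1..m}" "l \<in> {1..m}" "distinct [i, j, k, l]"
    "distinct [p, q, r]" "image_dir x i j = {p, q}" "image_dir x i k = {p, r}" "image_dir x i l = {q, r}"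
    "\<not> int n dvd a"
  shows "diffs (\<psi> x) (\<psi> (shift x i j a)) = {p, q}"
    and "2 * ((\<psi> (shift x i j a) p - \<psi> x p) mod int n) = int n"
proof -
  have sh: "shift x i h a \<in> V" "adj x (shift x i h a)" "diffs x (shift x i h a) = {i, h}"
    if "h \<in> {j, k, l}" for h
    using that shift_in_vertices adj_shift diffs_shift assms(1-6,11) by auto
  have img: "diffs (\<psi> x) (\<psi> (shift x i h a)) = image_dir x i h" if "h \<in> {j, k, l}" for h
    using diffs_aut_eq_image_dir_iff[OF assms(1) sh(1,2)[OF that]] sh(3)[OF that] that assms(2-6) by auto
  have adj: "adj (\<psi> (shift x i h a)) (\<psi> (shift x i h' a))" if "h \<in> {j, k, l}" "h' \<in> {j, k, l}" "h \<noteq> h'"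
    for h h'
    using adj_iff[OF sh(1)[OF that(1)] sh(1)[OF that(2)]] adj_shift_shift[OF assms(1) _ _ that(3) assms(11)]
      that assms(3-5) by auto
  have in_m: "p \<in> {1..m}" "q \<in> {1..m}" "r \<in> {1..m}"
    using image_dir_subset assms(8-10) by blast+
  show dir: "diffs (\<psi> x) (\<psi> (shift x i j a)) = {p, q}"
    using img assms(8) by simp
  have V: "\<psi> x \<in> V" "\<psi> (shift x i j a) \<in> V" "\<psi> (shift x i k a) \<in> V" "\<psi> (shift x i l a) \<in> V"
    using aut_in_vertices assms(1) sh(1) by auto
  have dirs: "diffs (\<psi> x) (\<psi> (shift x i k a)) = {p, r}" "diffs (\<psi> x) (\<psi> (shift x i l a)) = {q, r}"
    using img assms(9,10) by simp_all
  have adjs: "adj (\<psi> (shift x i j a)) (\<psi> (shift x i k a))" "adj (\<psi> (shift x i j a)) (\<psi> (shift x i l a))"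
    "adj (\<psi> (shift x i k a)) (\<psi> (shift x i l a))"
    using adj assms(6) by simp_all
  have "int n dvd (2 * (\<psi> (shift x i j a) p - \<psi> x p))"
    by (rule double_dvd_of_pair_triangle[OF V in_m assms(7) dir dirs adjs])
  moreover have "\<not> int n dvd (\<psi> (shift x i j a) p - \<psi> x p)"
    using mem_diffs_imp_not_dvd[OF V(1,2)] dir by simp
  ultimately show "2 * ((\<psi> (shift x i j a) p - \<psi> x p) mod int n) = int n"
    using double_dvd_imp_mod_eq n_pos by simp
qed

lemma image_dir_not_triangle:
  assumes "x \<in> V" "i \<in> {1..m}" "j \<in> {1..m}" "k \<in> {1..m}" "l \<in> {1..m}" "distinct [i, j, k, l]"
    "distinct [p, q, r]" "image_dir x i j = {p, q}" "image_dir x i k = {p, r}" "image_dir x i l = {q, r}"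
  shows False
proof -
  define X P where "X = \<psi> x" and "P a = \<psi> (shift x i j a)" for a
  have V: "X \<in> V" "P 1 \<in> V" "P 2 \<in> V"
    using aut_in_vertices shift_in_vertices assms(1-3) by (simp_all add: X_def P_def)
  \<comment> \<open>both shifts by 1 and by 2 move the \<open>p\<close>-th coordinate of the image by \<open>n / 2\<close>\<close>
  note half = image_dir_triangle_shift[OF assms, folded X_def P_def]
  have p: "p \<in> {1..m}" "q \<in> {1..m}"
    using image_dir_subset assms(8) by blast+
  have "(P 1 p - X p) mod int n = (P 2 p - X p) mod int n"
    using half(2)[OF not_dvd_1] half(2)[OF not_dvd_2] by simp
  then have "P 1 p = P 2 p"
    using vertex_coord_eq_iff[OF V(2,3) p(1)] by (simp add: mod_eq_dvd_iff)
  moreover have "P a = shift X p q (P a p - X p)" if "P a \<in> V" "\<not> int n dvd a" for a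
    using eq_shift_of_diffs_subset[OF V(1) that(1) p] assms(7) half(1)[OF that(2)] by simp
  ultimately have "P 1 = P 2"
    using V not_dvd_1 not_dvd_2 by metis
  then have "shift x i j 1 = shift x i j 2"
    using aut_eq_iff shift_in_vertices assms(1-3) by (simp add: P_def)
  moreover have "diffs (shift x i j 1) (shift x i j 2) = {i, j}"
    unfolding diffs_translate using assms(2,3,6) not_dvd_1 by (auto simp: edge_vec_def)
  ultimately show False
    by simp
qed

lemma image_dir_star:
  assumes "x \<in> V" "i \<in> {1..m}" "j \<in> {1..m}" "k \<in> {1..m}" "l \<in> {1..m}" "distinct [i, j, k, l]"
  shows "image_dir x i j \<inter> image_dir x i k \<inter> image_dir x i l \<noteq> {}"
proof
  assume empty: "image_dir x i j \<inter> image_dir x i k \<inter> image_dir x i l = {}"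
  obtain p where p: "p \<in> image_dir x i j" "p \<in> image_dir x i k"
    using image_dir_meet[OF assms(1-4)] assms(6) by auto
  obtain q where q: "q \<noteq> p" "image_dir x i j = {p, q}"
    using card_2_obtain_other[OF card_image_dir p(1)] assms by auto
  obtain r where r: "r \<noteq> p" "image_dir x i k = {p, r}"
    using card_2_obtain_other[OF card_image_dir p(2)] assms by auto
  have "q \<noteq> r"
    using image_dir_eq_iff[OF assms(1-3) _ assms(2,4)] assms(6) q r by (auto simp: doubleton_eq_iff)
  have "p \<notin> image_dir x i l"
    using empty p by blast
  moreover have "image_dir x i j \<inter> image_dir x i l \<noteq> {}" "image_dir x i k \<inter> image_dir x i l \<noteq> {}"
    using image_dir_meet[OF assms(1,2)] assms(3-6) by auto
  ultimately have "q \<in> image_dir x i l" "r \<in> image_dir x i l"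
    using q(2) r(2) by auto
  moreover have "i \<noteq> l"
    using assms(6) by simp
  ultimately have "image_dir x i l = {q, r}"
    using card_2_eqI[OF card_image_dir[OF assms(1,2,5)]] \<open>q \<noteq> r\<close> by blast
  then show False
    using image_dir_not_triangle[OF assms, of p q r] q r \<open>q \<noteq> r\<close> by simp
qed

section \<open>The induced permutation of coordinates\<close>

lemma exists_local_perm:
  assumes "x \<in> V"
  shows "\<exists>\<sigma>. inj_on \<sigma> {1..m} \<and> (\<forall>y \<in> V. adj x y \<longrightarrow> diffs (\<psi> x) (\<psi> y) = \<sigma> ` diffs x y)"
proof -
  obtain \<sigma> where \<sigma>: "inj_on \<sigma> {1..m}"
    "\<And>i j. i \<in> {1..m} \<Longrightarrow> j \<in> {1..m} \<Longrightarrow> i \<noteq> j \<Longrightarrow> image_dir x i j = {\<sigma> i, \<sigma> j}"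
  proof (rule pair_map_induced_by_injection[of "{1..m}" "image_dir x"])
    show "finite {1..m}" "3 < card {1..m}"
      using m_gt_3 by simp_all
  qed (rule image_dir_commute[OF assms] card_image_dir[OF assms] image_dir_star[OF assms]
      image_dir_disjoint[OF assms] that; assumption)+
  have "diffs (\<psi> x) (\<psi> y) = \<sigma> ` diffs x y" if y: "y \<in> V" "adj x y" for y
  proof -
    obtain i j where ij: "i \<noteq> j" "diffs x y = {i, j}"
      using adj_imp_diffs_eq y(2) by blast
    then have "i \<in> {1..m}" "j \<in> {1..m}"
      using diffs_subset by blast+
    then show ?thesis
      using diffs_aut_eq_image_dir_iff[OF assms y] \<sigma>(2) ij by simp
  qed
  then show ?thesis
    using \<sigma>(1) by blast
qed

definition local_perm :: "(nat \<Rightarrow> int) \<Rightarrow> nat \<Rightarrow> nat" where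
  "local_perm x = (SOME \<sigma>. inj_on \<sigma> {1..m} \<and> (\<forall>y \<in> V. adj x y \<longrightarrow> diffs (\<psi> x) (\<psi> y) = \<sigma> ` diffs x y))"

lemma
  assumes "x \<in> V"
  shows inj_on_local_perm: "inj_on (local_perm x) {1..m}"
    and diffs_aut_local_perm: "\<And>y. y \<in> V \<Longrightarrow> adj x y \<Longrightarrow> diffs (\<psi> x) (\<psi> y) = local_perm x ` diffs x y"
  using someI_ex[OF exists_local_perm[OF assms]] unfolding local_perm_def by blast+

lemma local_perm_pair_eq:
  assumes "x \<in> V" "y \<in> V" "adj x y" "diffs x y = {k, l}" "k \<noteq> l" "j \<in> {1..m}" "j \<notin> {k, l}"
  shows "{local_perm y l, local_perm y j} = {local_perm x l, local_perm x j}"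
proof -
  have in_m: "k \<in> {1..m}" "l \<in> {1..m}"
    using assms(4) diffs_subset by blast+
  define b where "b = y k - x k"
  have b: "\<not> int n dvd b"
    using mem_diffs_imp_not_dvd assms(1,2,4) by (simp add: b_def)
  define z where "z = shift x k j b"
  have z: "z \<in> V" "adj x z" "diffs x z = {k, j}"
    using shift_in_vertices adj_shift diffs_shift assms(1,6,7) in_m b by (auto simp: z_def)
  have y_eq: "y = shift x k l b"
    using eq_shift_of_diffs_subset[OF assms(1,2) in_m assms(5)] assms(4) by (simp add: b_def)
  have Dyz: "diffs y z = {l, j}"
    unfolding y_eq z_def diffs_translate using in_m assms(5-7) b by (auto simp: edge_vec_def)
  then have "adj y z"
    using assms(7) by (simp add: adj_iff_card_diffs)
  define \<sigma> where "\<sigma> = local_perm x"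
  have \<sigma>_neq: "\<sigma> a \<noteq> \<sigma> a'" if "a \<in> {1..m}" "a' \<in> {1..m}" "a \<noteq> a'" for a a'
    using inj_onD[OF inj_on_local_perm[OF assms(1)]] that by (auto simp: \<sigma>_def)
  have "\<sigma> l \<in> diffs (\<psi> x) (\<psi> y) - diffs (\<psi> x) (\<psi> z)"
    using diffs_aut_local_perm[OF assms(1)] assms(2-5,7) z \<sigma>_neq in_m assms(6) by (auto simp: \<sigma>_def)
  moreover have "\<sigma> j \<in> diffs (\<psi> x) (\<psi> z) - diffs (\<psi> x) (\<psi> y)"
    using diffs_aut_local_perm[OF assms(1)] assms(2-5,7) z \<sigma>_neq in_m assms(6) by (auto simp: \<sigma>_def)
  ultimately have mem: "\<sigma> l \<in> diffs (\<psi> y) (\<psi> z)" "\<sigma> j \<in> diffs (\<psi> y) (\<psi> z)"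
    using diffs_diff_subset diffs_commute by blast+
  have card: "card (diffs (\<psi> y) (\<psi> z)) = 2"
    using adj_iff[OF assms(2) z(1)] \<open>adj y z\<close> by (simp add: adj_iff_card_diffs)
  have "\<sigma> l \<noteq> \<sigma> j"
    using \<sigma>_neq in_m assms(6,7) by auto
  then have "diffs (\<psi> y) (\<psi> z) = {\<sigma> l, \<sigma> j}"
    by (rule card_2_eqI[OF card mem])
  moreover have "diffs (\<psi> y) (\<psi> z) = {local_perm y l, local_perm y j}"
    using diffs_aut_local_perm[OF assms(2) z(1) \<open>adj y z\<close>] Dyz by simp
  ultimately show ?thesis
    by (simp add: \<sigma>_def)
qed

lemma local_perm_in_range:
  assumes "x \<in> V" "i \<in> {1..m}"
  shows "local_perm x i \<in> {1..m}"
proof -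
  obtain j where j: "j \<in> {1..m}" "j \<noteq> i"
    using exists_fourth[of "{1..m}" i i i] m_gt_3 by auto
  then have "local_perm x i \<in> diffs (\<psi> x) (\<psi> (shift x i j 1))"
    using diffs_aut_local_perm[OF assms(1) shift_one(1,2)[OF assms j(1)]] shift_one(3)[OF assms j(1)] by simp
  then show ?thesis
    using diffs_subset by blast
qed

lemma local_perm_endpoint:
  assumes "x \<in> V" "y \<in> V" "adj x y" "diffs x y = {k, l}" "k \<noteq> l"
  shows "local_perm y l = local_perm x l"
proof (rule ccontr)
  assume ne: "local_perm y l \<noteq> local_perm x l"
  have in_m: "k \<in> {1..m}" "l \<in> {1..m}"
    using assms(4) diffs_subset by blast+
  obtain j where j: "j \<in> {1..m}" "j \<notin> {k, l}"
    using exists_fourth[of "{1..m}" k l l] m_gt_3 by auto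
  obtain j' where j': "j' \<in> {1..m}" "j' \<notin> {k, l, j}"
    using exists_fourth[of "{1..m}" k l j] m_gt_3 by auto
  have "local_perm y j = local_perm x l" "local_perm y j' = local_perm x l"
    using local_perm_pair_eq[OF assms] j j' ne by (auto simp: doubleton_eq_iff)
  then show False
    using inj_onD[OF inj_on_local_perm[OF assms(2)]] j j' by force
qed

lemma local_perm_step:
  assumes "x \<in> V" "y \<in> V" "adj x y" "i \<in> {1..m}"
  shows "local_perm y i = local_perm x i"
proof -
  obtain k l where kl: "k \<noteq> l" "diffs x y = {k, l}"
    using adj_imp_diffs_eq assms(3) by blast
  have l: "local_perm y l = local_perm x l"
    using local_perm_endpoint[OF assms(1-3) kl(2,1)] .
  have k: "local_perm y k = local_perm x k"
    using local_perm_endpoint[OF assms(1-3) _ kl(1)[symmetric]] kl(2) by (simp add: insert_commute)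
  show ?thesis
  proof (cases "i \<in> {k, l}")
    case False
    have "l \<in> {1..m}"
      using kl(2) diffs_subset by blast
    then have "local_perm x i \<noteq> local_perm x l"
      using inj_onD[OF inj_on_local_perm[OF assms(1)]] assms(4) False by blast
    then show ?thesis
      using local_perm_pair_eq[OF assms(1-3) kl(2,1) assms(4) False] l by (auto simp: doubleton_eq_iff)
  qed (use k l in auto)
qed

definition coord_perm :: "nat \<Rightarrow> nat" where
  "coord_perm i = (if i \<in> {1..m} then local_perm (\<lambda>_. 0) i else i)"

lemma local_perm_eq_coord_perm:
  assumes "x \<in> V" "i \<in> {1..m}"
  shows "local_perm x i = coord_perm i"
proof -
  have "x 0 = 0"
    using vertex_coord_outside[OF assms(1)] by simp
  \<comment> \<open>coordinate 0 lies outside \<open>{1..m}\<close>, so this is induction along arbitrary paths\<close>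
  then have "\<forall>i \<in> {1..m}. local_perm x i = local_perm (\<lambda>_. 0) i"
    using fixed_coord_induct[where P = "\<lambda>z. \<forall>i \<in> {1..m}. local_perm z i = local_perm (\<lambda>_. 0) i",
        OF zero_vertex assms(1)] local_perm_step by simp
  then show ?thesis
    using assms(2) by (simp add: coord_perm_def)
qed

lemma coord_perm_permutes: "coord_perm permutes {1..m}"
proof (rule bij_imp_permutes)
  have "inj_on coord_perm {1..m}"
    using inj_on_cong[of "{1..m}" coord_perm "local_perm (\<lambda>_. 0)"] inj_on_local_perm[OF zero_vertex]
    by (simp add: coord_perm_def)
  moreover have "coord_perm ` {1..m} \<subseteq> {1..m}"
    using local_perm_in_range[OF zero_vertex] by (auto simp: coord_perm_def)
  ultimately show "bij_betw coord_perm {1..m} {1..m}"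
    by (simp add: bij_betw_def endo_inj_surj)
qed (auto simp: coord_perm_def)

lemma diffs_aut:
  assumes "x \<in> V" "y \<in> V" "adj x y"
  shows "diffs (\<psi> x) (\<psi> y) = coord_perm ` diffs x y"
  using diffs_aut_local_perm[OF assms] local_perm_eq_coord_perm[OF assms(1)] diffs_subset[of x y]
  by (auto intro!: image_cong)

lemma aut_coord_eq:
  assumes "x \<in> V" "y \<in> V" "i \<in> {1..m}" "x i = y i"
  shows "\<psi> y (coord_perm i) = \<psi> x (coord_perm i)"
proof (rule fixed_coord_induct[where P = "\<lambda>z. \<psi> z (coord_perm i) = \<psi> x (coord_perm i)", OF assms(1,2,4)])
  fix u v assume uv: "u \<in> V" "v \<in> V" "adj u v" "u i = v i" "\<psi> u (coord_perm i) = \<psi> x (coord_perm i)"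
  have "coord_perm i \<in> {1..m}"
    using permutes_in_image[OF coord_perm_permutes] assms(3) by simp
  moreover have "coord_perm i \<notin> coord_perm ` diffs u v"
    using permutes_inj[OF coord_perm_permutes] uv(4) by (auto simp: mem_diffs_iff inj_eq)
  ultimately show "\<psi> v (coord_perm i) = \<psi> x (coord_perm i)"
    using diffs_aut[OF uv(1-3)] uv(5) by (auto simp: mem_diffs_iff)
qed simp

end

section \<open>The affine form\<close>

definition csr_affine_map :: "nat \<Rightarrow> nat \<Rightarrow> ((nat \<Rightarrow> int) \<Rightarrow> nat \<Rightarrow> int) \<Rightarrow> bool" where
  "csr_affine_map m n \<psi> \<longleftrightarrow>
    (\<exists>\<sigma> (c::int) (d::nat \<Rightarrow> int). \<sigma> permutes {1..m} \<and> coprime c (int n) \<and>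
        (\<Sum>i=1..m. d i) mod int n = 0 \<and>
        (\<forall>x\<in>csr_vertices m n. \<psi> x = (\<lambda>i. if i \<in> {1..m} then (c * x (\<sigma> i) + d i) mod int n else 0)))"

context csr
begin

lemma adj_affine_iff:
  assumes "\<sigma> permutes {1..m}" "coprime c (int n)" "x \<in> V" "y \<in> V"
  shows "adj (\<lambda>i. if i \<in> {1..m} then (c * x (\<sigma> i) + d i) mod int n else 0)
             (\<lambda>i. if i \<in> {1..m} then (c * y (\<sigma> i) + d i) mod int n else 0) \<longleftrightarrow> adj x y"
    (is "adj (?f x) (?f y) \<longleftrightarrow> _")
proof -
  have coord: "(c * x (\<sigma> i) + d i) mod int n = (c * y (\<sigma> i) + d i) mod int n \<longleftrightarrow> x (\<sigma> i) = y (\<sigma> i)"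
    if "i \<in> {1..m}" for i
  proof -
    have "(c * x (\<sigma> i) + d i) mod int n = (c * y (\<sigma> i) + d i) mod int n
        \<longleftrightarrow> int n dvd c * (x (\<sigma> i) - y (\<sigma> i))"
      by (simp add: mod_eq_dvd_iff algebra_simps)
    also have "\<dots> \<longleftrightarrow> int n dvd (x (\<sigma> i) - y (\<sigma> i))"
      using assms(2) by (simp add: coprime_dvd_mult_right_iff coprime_commute)
    also have "\<dots> \<longleftrightarrow> x (\<sigma> i) = y (\<sigma> i)"
      using vertex_coord_eq_iff[OF assms(3,4)] permutes_in_image[OF assms(1)] that by simp
    finally show ?thesis .
  qed
  have "diffs (?f x) (?f y) = {i \<in> {1..m}. \<sigma> i \<in> diffs x y}"
    using coord permutes_in_image[OF assms(1)] by (auto simp: diffs_def)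
  moreover have "\<sigma> ` {i \<in> {1..m}. \<sigma> i \<in> diffs x y} = diffs x y"
  proof
    show "diffs x y \<subseteq> \<sigma> ` {i \<in> {1..m}. \<sigma> i \<in> diffs x y}"
    proof
      fix j assume j: "j \<in> diffs x y"
      then obtain i where "i \<in> {1..m}" "\<sigma> i = j"
        using diffs_subset permutes_image[OF assms(1)] by (metis imageE subsetD)
      then show "j \<in> \<sigma> ` {i \<in> {1..m}. \<sigma> i \<in> diffs x y}"
        using j by blast
    qed
  qed blast
  then have "bij_betw \<sigma> {i \<in> {1..m}. \<sigma> i \<in> diffs x y} (diffs x y)"
    by (rule bij_betw_subset[OF permutes_imp_bij[OF assms(1)], rotated]) blast
  ultimately show ?thesis
    by (simp add: adj_iff_card_diffs bij_betw_same_card)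
qed

lemma csr_automorphism_of_affine_map:
  assumes "csr_affine_map m n \<psi>" "bij_betw \<psi> V V"
  shows "csr_automorphism m n \<psi>"
proof -
  obtain \<sigma> c d where "\<sigma> permutes {1..m}" "coprime c (int n)"
    "\<forall>x \<in> V. \<psi> x = (\<lambda>i. if i \<in> {1..m} then (c * x (\<sigma> i) + d i) mod int n else 0)"
    using assms(1) by (auto simp: csr_affine_map_def)
  then show ?thesis
    using assms(2) adj_affine_iff by (simp add: csr_automorphism_def)
qed

end

context csr_aut
begin

(* Any vertex with i-th coordinate t mod n may be used here, by aut_coord_eq. *)
definition coord_val :: "nat \<Rightarrow> int \<Rightarrow> int" where
  "coord_val i t = \<psi> (SOME x. x \<in> V \<and> x i = t mod int n) (coord_perm i) - \<psi> (\<lambda>_. 0) (coord_perm i)"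

lemma coord_val_eq:
  assumes "x \<in> V" "i \<in> {1..m}"
  shows "coord_val i (x i) = \<psi> x (coord_perm i) - \<psi> (\<lambda>_. 0) (coord_perm i)"
proof -
  have "\<exists>y. y \<in> V \<and> y i = x i mod int n"
    using assms vertex_coord_mod by metis
  then have "(SOME y. y \<in> V \<and> y i = x i mod int n) \<in> V \<and> (SOME y. y \<in> V \<and> y i = x i mod int n) i = x i"
    using someI_ex vertex_coord_mod[OF assms] by (metis (mono_tags, lifting))
  then show ?thesis
    using aut_coord_eq[OF assms(1) _ assms(2)] by (simp add: coord_val_def)
qed

lemma aut_coord_affine:
  assumes "x \<in> V" "i \<in> {1..m}"
  shows "\<psi> x (coord_perm i) = (coord_val 1 1 * x i + \<psi> (\<lambda>_. 0) (coord_perm i)) mod int n"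
proof -
  have "int n dvd (coord_val i (int k) - int k * coord_val 1 1)" for k
  proof (rule zero_sum_functional_linear[where h = coord_val, OF _ _ _ assms(2)])
    fix y assume y: "y \<in> V"
    have "(\<Sum>i=1..m. coord_val i (y i))
        = (\<Sum>i=1..m. \<psi> y (coord_perm i)) - (\<Sum>i=1..m. \<psi> (\<lambda>_. 0) (coord_perm i))"
      using coord_val_eq[OF y] by (simp add: sum_subtractf)
    also have "\<dots> = (\<Sum>i=1..m. \<psi> y i) - (\<Sum>i=1..m. \<psi> (\<lambda>_. 0) i)"
      using sum.reindex_bij_betw[OF permutes_imp_bij[OF coord_perm_permutes], of "\<psi> y"]
        sum.reindex_bij_betw[OF permutes_imp_bij[OF coord_perm_permutes], of "\<psi> (\<lambda>_. 0)"] by simp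
    finally show "int n dvd (\<Sum>i=1..m. coord_val i (y i))"
      using vertex_sum_dvd aut_in_vertices y zero_vertex by simp
  next
    fix i assume "i \<in> {1..m}"
    then show "coord_val i 0 = 0"
      using coord_val_eq[OF zero_vertex] by simp
  qed (simp add: coord_val_def)
  from this[of "nat (x i)"] have "int n dvd (\<psi> x (coord_perm i) - (coord_val 1 1 * x i + \<psi> (\<lambda>_. 0) (coord_perm i)))"
    using coord_val_eq[OF assms] vertex_coord_range[OF assms] by (simp add: algebra_simps)
  then show ?thesis
    using vertex_coord_mod[OF aut_in_vertices[OF assms(1)] permutes_in_image[OF coord_perm_permutes, THEN iffD2, OF assms(2)]]
    by (metis mod_eq_dvd_iff)
qed

lemma coprime_coord_val: "coprime (coord_val 1 1) (int n)"
proof (rule coprime_of_dvd_mult_cancel)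
  show "0 < int n"
    using n_pos by simp
  fix t assume ct: "int n dvd coord_val 1 1 * t"
  define x where "x = shift (\<lambda>_. 0) 1 2 t"
  have in_m: "1 \<in> {1..m}" "2 \<in> {1..m}"
    using m_gt_3 by auto
  have x: "x \<in> V"
    using shift_in_vertices[OF zero_vertex in_m] by (simp add: x_def)
  have same: "\<psi> x (coord_perm i) = \<psi> (\<lambda>_. 0) (coord_perm i)" if "i \<in> {1..m}" for i
  proof -
    have "int n dvd coord_val 1 1 * edge_vec 1 2 t i"
      using ct by (auto simp: edge_vec_def)
    then have "int n dvd coord_val 1 1 * x i"
      using that by (simp add: x_def dvd_eq_mod_eq_0 mod_mult_right_eq)
    then have "(coord_val 1 1 * x i + \<psi> (\<lambda>_. 0) (coord_perm i)) mod int n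
        = \<psi> (\<lambda>_. 0) (coord_perm i) mod int n"
      by (simp add: mod_eq_dvd_iff)
    moreover have "coord_perm i \<in> {1..m}"
      using permutes_in_image[OF coord_perm_permutes] that by simp
    ultimately show ?thesis
      using aut_coord_affine[OF x that] vertex_coord_mod[OF aut_in_vertices[OF zero_vertex]] by simp
  qed
  have "\<psi> x j = \<psi> (\<lambda>_. 0) j" if "j \<in> {1..m}" for j
    using same[of "inv coord_perm j"] that permutes_in_image[OF permutes_inv[OF coord_perm_permutes]]
      permutes_inverses(1)[OF coord_perm_permutes] by simp
  then have "\<psi> x = \<psi> (\<lambda>_. 0)"
    using vertex_eqI[OF aut_in_vertices[OF x] aut_in_vertices[OF zero_vertex]] by blast
  then have "x 1 = 0"
    using aut_eq_iff[OF x zero_vertex] by simp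
  then show "int n dvd t"
    using in_m by (simp add: x_def edge_vec_def dvd_eq_mod_eq_0)
qed

theorem csr_affine_map_aut: "csr_affine_map m n \<psi>"
  unfolding csr_affine_map_def
proof (intro exI[of _ "inv coord_perm"] exI[of _ "coord_val 1 1"] exI[of _ "\<psi> (\<lambda>_. 0)"] conjI ballI ext)
  show "inv coord_perm permutes {1..m}"
    using permutes_inv coord_perm_permutes by blast
  show "coprime (coord_val 1 1) (int n)"
    by (rule coprime_coord_val)
  show "(\<Sum>i=1..m. \<psi> (\<lambda>_. 0) i) mod int n = 0"
    using vertex_sum_dvd aut_in_vertices zero_vertex by (simp add: dvd_eq_mod_eq_0)
  fix x i assume x: "x \<in> V"
  show "\<psi> x i = (if i \<in> {1..m} then (coord_val 1 1 * x (inv coord_perm i) + \<psi> (\<lambda>_. 0) i) mod int n else 0)"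
  proof (cases "i \<in> {1..m}")
    case True
    then have "inv coord_perm i \<in> {1..m}" "coord_perm (inv coord_perm i) = i"
      using permutes_in_image[OF permutes_inv[OF coord_perm_permutes]]
        permutes_inverses(1)[OF coord_perm_permutes] by simp_all
    then show ?thesis
      using aut_coord_affine[OF x] True by metis
  qed (auto simp: vertex_coord_outside aut_in_vertices x)
qed

end

theorem lemma9:
  fixes m n :: nat and \<psi> :: "(nat \<Rightarrow> int) \<Rightarrow> (nat \<Rightarrow> int)"
  assumes "n > 3" and "m > 3"
    and "bij_betw \<psi> (csr_vertices m n) (csr_vertices m n)"
  shows "csr_automorphism m n \<psi> \<longleftrightarrow>
    (\<exists>\<sigma> (c::int) (d::nat \<Rightarrow> int). \<sigma> permutes {1..m} \<and> coprime c (int n) \<and>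
        (\<Sum>i=1..m. d i) mod int n = 0 \<and>
        (\<forall>x\<in>csr_vertices m n. \<psi> x = (\<lambda>i. if i \<in> {1..m} then (c * x (\<sigma> i) + d i) mod int n else 0)))"
proof -
  interpret csr m n
    using assms by unfold_locales simp
  have "csr_automorphism m n \<psi> \<longleftrightarrow> csr_affine_map m n \<psi>"
  proof
    assume "csr_automorphism m n \<psi>"
    then interpret csr_aut m n \<psi>
      using assms by unfold_locales (auto simp: csr_automorphism_def)
    show "csr_affine_map m n \<psi>"
      by (rule csr_affine_map_aut)
  qed (rule csr_automorphism_of_affine_map[OF _ assms(3)])
  then show ?thesis
    by (simp only: csr_affine_map_def)
qed

end
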